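(* Let $k$ be an étale cubic algebra over $\mathbb{Q}$ and let $\mathcal{O}\subset\mathcal{O}_k$ be a cubic ring such that the index $f=(\mathcal{O}_k:\mathcal{O})$ is square free. Then there exists a normalized basis $\{1,\omega,\theta\}$ of $\mathcal{O}_k$ with $\omega,\theta\in k^\times$ (invertible elements of $k$) such that $\mathcal{O}=[1,f\omega,\theta]$ and $[f,f\omega,\theta]$ is the conductor of $\mathcal{O}$.
   Context: An étale cubic algebra is a direct sum of number fields of total degree $3$ over $\mathbb{Q}$; $\mathcal{O}_k$ is its maximal order. A $\mathbb{Z}$-basis $\{1,\omega,\theta\}$ of a cubic ring is normalized if $\omega\theta\in\mathbb{Z}$. $[\beta_1,\beta_2,\beta_3]$ denotes the $\mathbb{Z}$-span. The conductor of $\mathcal{O}$ is the largest $\mathcal{O}_k$-ideal contained in $\mathcal{O}$. *)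

theory Defs
  imports Main "HOL-Computational_Algebra.Polynomial" "HOL-Computational_Algebra.Squarefree"
begin

text \<open>A commutative Q-algebra k (ring structure given by the type class, Q-scalar
multiplication given by scale) is an etale cubic algebra: it has dimension 3 over Q and is a
direct sum of fields, i.e. 1 is a sum of nonzero pairwise orthogonal idempotents e each of
which cuts out a field e k (with identity e).  Each factor is then a finite extension of Q,
i.e. a number field, and the degrees add up to 3.\<close>

definition direct_sum_of_fields :: "'k::comm_ring_1 set \<Rightarrow> bool" where
  "direct_sum_of_fields E \<longleftrightarrow>
     finite E \<and> sum id E = 1 \<and>
     (\<forall>e\<in>E. e \<noteq> 0 \<and> e * e = e) \<and>
     (\<forall>e\<in>E. \<forall>e'\<in>E. e \<noteq> e' \<longrightarrow> e * e' = 0) \<and>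
     (\<forall>e\<in>E. \<forall>x. e * x \<noteq> 0 \<longrightarrow> (\<exists>y. (e * x) * (e * y) = e))"

definition etale_cubic_algebra :: "(rat \<Rightarrow> 'k::comm_ring_1 \<Rightarrow> 'k) \<Rightarrow> bool" where
  "etale_cubic_algebra scale \<longleftrightarrow>
     vector_space scale \<and>
     (\<forall>q x y. scale q (x * y) = scale q x * y) \<and>
     vector_space.dim scale (UNIV :: 'k set) = 3 \<and>
     (\<exists>E::'k set. direct_sum_of_fields E)"

definition maximal_order :: "'k::comm_ring_1 set" where
  "maximal_order = {x. \<exists>p :: int poly. lead_coeff p = 1 \<and> poly (map_poly of_int p) x = 0}"

definition zspan3 :: "'k::comm_ring_1 \<Rightarrow> 'k \<Rightarrow> 'k \<Rightarrow> 'k set" where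
  "zspan3 a b c = {of_int x * a + of_int y * b + of_int z * c | x y z. True}"

definition zindep3 :: "'k::comm_ring_1 \<Rightarrow> 'k \<Rightarrow> 'k \<Rightarrow> bool" where
  "zindep3 a b c \<longleftrightarrow>
     (\<forall>x y z. of_int x * a + of_int y * b + of_int z * c = 0 \<longrightarrow> x = 0 \<and> y = 0 \<and> z = 0)"

definition zbasis3 :: "'k::comm_ring_1 set \<Rightarrow> 'k \<Rightarrow> 'k \<Rightarrow> 'k \<Rightarrow> bool" where
  "zbasis3 M a b c \<longleftrightarrow> M = zspan3 a b c \<and> zindep3 a b c"

definition subring1 :: "'k::comm_ring_1 set \<Rightarrow> bool" where
  "subring1 R \<longleftrightarrow> 1 \<in> R \<and> (\<forall>x\<in>R. \<forall>y\<in>R. x + y \<in> R \<and> x - y \<in> R \<and> x * y \<in> R)"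

definition cubic_ring :: "'k::comm_ring_1 set \<Rightarrow> bool" where
  "cubic_ring R \<longleftrightarrow> subring1 R \<and> (\<exists>a b c. zbasis3 R a b c)"

definition group_index :: "'k::comm_ring_1 set \<Rightarrow> 'k set \<Rightarrow> nat" where
  "group_index M N = card ((\<lambda>x. (\<lambda>n. x + n) ` N) ` M)"

definition ideal_of :: "'k::comm_ring_1 set \<Rightarrow> 'k set \<Rightarrow> bool" where
  "ideal_of R I \<longleftrightarrow> I \<subseteq> R \<and> 0 \<in> I \<and> (\<forall>x\<in>I. \<forall>y\<in>I. x + y \<in> I \<and> x - y \<in> I) \<and>
     (\<forall>x\<in>I. \<forall>r\<in>R. r * x \<in> I)"

definition is_conductor :: "'k::comm_ring_1 set \<Rightarrow> 'k set \<Rightarrow> 'k set \<Rightarrow> bool" where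
  "is_conductor R S C \<longleftrightarrow> ideal_of R C \<and> C \<subseteq> S \<and> (\<forall>I. ideal_of R I \<and> I \<subseteq> S \<longrightarrow> I \<subseteq> C)"

end

theory Submission
  imports Defs "Jordan_Normal_Form.Char_Poly"
begin

text \<open>
  Because the index f is squarefree, the additive group of O_k / O is cyclic: after choosing a
  basis 1, a, b of O_k, the image of O in O_k / Z = Z a + Z b is a lattice whose Hermite normal
  form has coprime diagonal entries d1 d2 = f, so its elementary divisors are 1 and f. This gives a
  basis 1, \<omega>, \<theta> of O_k with O = [1, f \<omega>, \<theta>].

  Translating \<omega> and \<theta> by integers makes \<omega> \<theta> = n an integer. A unimodular change
  \<omega> \<mapsto> A \<omega> + B \<theta>, \<theta> \<mapsto> C \<omega> + \<theta> with f | C preserves the shape of both bases, and after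
  renormalizing the new product is - F(A, B) F(C, 1), where F is the index form of the
  multiplication table. Since k is reduced, F is not zero, so suitable A, B, C make n \<noteq> 0,
  and then \<omega> and \<theta> are units (nonzero integers are invertible in a Q-algebra).

  With n = t s', r' = - s s' and f | s' read off the multiplication table, [f, f \<omega>, \<theta>] is an
  O_k-ideal; conversely, if x = a + b f \<omega> + c \<theta> lies in an O_k-ideal inside O, then \<omega> x \<in> O
  forces f | a.
\<close>

section \<open>Integral elements\<close>

definition int_span :: "'i set \<Rightarrow> ('i \<Rightarrow> 'k::comm_ring_1) \<Rightarrow> 'k set" where
  "int_span I g = {\<Sum>i\<in>I. of_int (c i) * g i | c. True}"

lemma int_span_0: "0 \<in> int_span I g"
  unfolding int_span_def by (rule CollectI, rule exI[of _ "\<lambda>_. 0"]) simp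

lemma int_span_add:
  assumes "u \<in> int_span I g" "v \<in> int_span I g"
  shows "u + v \<in> int_span I g"
proof -
  obtain c d where "u = (\<Sum>i\<in>I. of_int (c i) * g i)" "v = (\<Sum>i\<in>I. of_int (d i) * g i)"
    using assms unfolding int_span_def by blast
  hence "u + v = (\<Sum>i\<in>I. of_int (c i + d i) * g i)"
    by (simp add: sum.distrib algebra_simps)
  thus ?thesis unfolding int_span_def by (auto intro!: exI[of _ "\<lambda>i. c i + d i"])
qed

lemma int_span_of_int_mult:
  assumes "u \<in> int_span I g"
  shows "of_int m * u \<in> int_span I g"
proof -
  obtain c where "u = (\<Sum>i\<in>I. of_int (c i) * g i)" using assms unfolding int_span_def by blast
  hence "of_int m * u = (\<Sum>i\<in>I. of_int (m * c i) * g i)"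
    by (simp add: sum_distrib_left algebra_simps)
  thus ?thesis unfolding int_span_def by (auto intro!: exI[of _ "\<lambda>i. m * c i"])
qed

lemma int_span_uminus: "u \<in> int_span I g \<Longrightarrow> - u \<in> int_span I g"
  using int_span_of_int_mult[of u I g "-1"] by simp

lemma int_span_sum:
  "finite F \<Longrightarrow> (\<And>j. j \<in> F \<Longrightarrow> f j \<in> int_span I g) \<Longrightarrow> sum f F \<in> int_span I g"
  by (induction F rule: finite_induct) (auto intro: int_span_0 int_span_add)

lemma int_span_generator:
  assumes "finite I" "i \<in> I"
  shows "g i \<in> int_span I g"
proof -
  have "(\<Sum>j\<in>I. of_int (if j = i then 1 else 0) * g j) = (\<Sum>j\<in>I. if j = i then g j else 0)"
    by (rule sum.cong) auto
  also have "\<dots> = g i" using assms by (simp add: sum.delta')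
  finally show ?thesis
    unfolding int_span_def by (auto intro!: exI[of _ "\<lambda>j. if j = i then 1 else 0"])
qed

lemma int_span_mult:
  assumes "finite I" and gen: "\<And>i j. i \<in> I \<Longrightarrow> j \<in> I \<Longrightarrow> g i * g j \<in> int_span I g"
    and "u \<in> int_span I g" "v \<in> int_span I g"
  shows "u * v \<in> int_span I g"
proof -
  obtain c d where u: "u = (\<Sum>i\<in>I. of_int (c i) * g i)" and v: "v = (\<Sum>i\<in>I. of_int (d i) * g i)"
    using assms(3,4) unfolding int_span_def by blast
  have "u * v = (\<Sum>i\<in>I. \<Sum>j\<in>I. of_int (c i * d j) * (g i * g j))"
    unfolding u v sum_product by (simp add: algebra_simps)
  also have "\<dots> \<in> int_span I g"
    using assms(1) gen by (intro int_span_sum int_span_of_int_mult) auto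
  finally show ?thesis .
qed

lemma det_mult_vec_component_eq_0:
  fixes B :: "'a::comm_ring_1 mat"
  assumes B: "B \<in> carrier_mat n n" and v: "v \<in> carrier_vec n" and Bv: "B *\<^sub>v v = 0\<^sub>v n"
    and i: "i < n"
  shows "det B * v $ i = 0"
proof -
  have "(det B \<cdot>\<^sub>m 1\<^sub>m n) *\<^sub>v v = (adj_mat B * B) *\<^sub>v v"
    using adj_mat(3)[OF B] by simp
  also have "\<dots> = adj_mat B *\<^sub>v (B *\<^sub>v v)"
    using B v adj_mat(1)[OF B] by (simp add: assoc_mult_mat_vec)
  also have "\<dots> = 0\<^sub>v n"
    unfolding Bv using adj_mat(1)[OF B] by (intro eq_vecI) (auto simp: mult_mat_vec_def)
  finally have "0 = ((det B \<cdot>\<^sub>m 1\<^sub>m n) *\<^sub>v v) $ i" using i by simp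
  also have "\<dots> = (\<Sum>j = 0..<n. det B * (if j = i then 1 else 0) * v $ j)"
    using i v unfolding mult_mat_vec_def scalar_prod_def by (auto intro!: sum.cong)
  also have "\<dots> = (\<Sum>j = 0..<n. if j = i then det B * v $ j else 0)"
    by (rule sum.cong) auto
  finally show ?thesis using i by (simp add: sum.delta')
qed

text \<open>The determinant trick: if multiplication by x maps the integer span of g_0, ..., g_(n-1),
  which contains 1, into itself with matrix A, then det (x I - A) kills every g_i and hence 1,
  so x is a root of the characteristic polynomial of A.\<close>

lemma determinant_trick:
  fixes x :: "'k::comm_ring_1" and g :: "nat \<Rightarrow> 'k"
  assumes one: "1 = (\<Sum>i<n. of_int (c i) * g i)"
    and mul: "\<And>i. i < n \<Longrightarrow> x * g i = (\<Sum>j<n. of_int (A i j) * g j)"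
  shows "x \<in> maximal_order"
proof -
  define Ai :: "int mat" where "Ai = mat n n (\<lambda>(i,j). A i j)"
  define Ak :: "'k mat" where "Ak = map_mat of_int Ai"
  define B :: "'k mat" where "B = x \<cdot>\<^sub>m 1\<^sub>m n - Ak"
  define v where "v = vec n g"
  have Ai: "Ai \<in> carrier_mat n n" unfolding Ai_def by simp
  have Ak: "Ak \<in> carrier_mat n n" unfolding Ak_def using Ai by simp
  have B: "B \<in> carrier_mat n n" unfolding B_def using Ak by (intro minus_carrier_mat) auto
  have v: "v \<in> carrier_vec n" unfolding v_def by simp
  have Bv: "B *\<^sub>v v = 0\<^sub>v n"
  proof (rule eq_vecI)
    fix i assume "i < dim_vec (0\<^sub>v n :: 'k vec)"
    hence i: "i < n" by simp
    have "(B *\<^sub>v v) $ i = (\<Sum>j<n. (if i = j then x * g j else 0) - of_int (A i j) * g j)"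
      using B i unfolding mult_mat_vec_def scalar_prod_def v_def B_def Ak_def Ai_def
      by (auto simp: atLeast0LessThan algebra_simps intro!: sum.cong)
    also have "\<dots> = 0" using i mul[OF i] by (simp add: sum_subtractf sum.delta')
    finally show "(B *\<^sub>v v) $ i = 0\<^sub>v n $ i" using i by simp
  qed (use B in auto)
  have dg: "det B * g i = 0" if "i < n" for i
    using det_mult_vec_component_eq_0[OF B v Bv that] unfolding v_def using that by simp
  have "det B = (\<Sum>i<n. of_int (c i) * (det B * g i))"
    using arg_cong[of _ _ "\<lambda>w. det B * w", OF one] by (simp add: sum_distrib_left algebra_simps)
  hence "det B = 0" using dg by simp
  moreover have "poly (map_poly of_int (char_poly Ai)) x = det B"
  proof -
    have "poly (char_poly Ak) x = det B"
      unfolding char_poly_def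
      by (rule poly_det_cong[OF B], insert Ak, auto simp: char_poly_matrix_def B_def)
    thus ?thesis unfolding Ak_def of_int_hom.char_poly_hom[OF Ai] .
  qed
  moreover have "lead_coeff (char_poly Ai) = 1" using degree_monic_char_poly[OF Ai] by simp
  ultimately show ?thesis unfolding maximal_order_def by auto
qed

lemma determinant_trick_int_span:
  fixes x :: "'k::comm_ring_1"
  assumes fin: "finite I" and one: "1 \<in> int_span I g"
    and mul: "\<And>i. i \<in> I \<Longrightarrow> x * g i \<in> int_span I g"
  shows "x \<in> maximal_order"
proof -
  obtain h where h: "bij_betw h {..<card I} I"
    using ex_bij_betw_nat_finite[OF fin] by (auto simp: atLeast0LessThan)
  have reindex: "(\<Sum>i\<in>I. of_int (c i) * g i) = (\<Sum>j<card I. of_int (c (h j)) * g (h j))" for c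
    by (rule sum.reindex_bij_betw[OF h, symmetric])
  from one obtain c where c: "1 = (\<Sum>i\<in>I. of_int (c i) * g i)" unfolding int_span_def by blast
  have "\<forall>j. \<exists>a. j < card I \<longrightarrow> x * g (h j) = (\<Sum>i\<in>I. of_int (a i) * g i)"
    using mul bij_betwE[OF h] unfolding int_span_def by blast
  then obtain a where a: "\<And>j. j < card I \<Longrightarrow> x * g (h j) = (\<Sum>i\<in>I. of_int (a j i) * g i)"
    by metis
  show ?thesis
    by (rule determinant_trick[where c = "\<lambda>j. c (h j)" and A = "\<lambda>j j'. a j (h j')"])
      (use c a reindex in auto)
qed

lemma poly_of_int_poly_eq_sum:
  "poly (map_poly (of_int :: int \<Rightarrow> 'k::comm_ring_1) p) x = (\<Sum>i\<le>degree p. of_int (coeff p i) * x ^ i)"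
proof -
  let ?q = "map_poly (of_int :: int \<Rightarrow> 'k) p"
  have "poly ?q x = (\<Sum>i\<le>degree ?q. coeff ?q i * x ^ i)" by (rule poly_altdef)
  also have "\<dots> = (\<Sum>i\<le>degree p. coeff ?q i * x ^ i)"
  proof (rule sum.mono_neutral_left)
    show "\<forall>i\<in>{..degree p} - {..degree ?q}. coeff ?q i * x ^ i = 0"
      using le_degree[of ?q] by (metis Diff_iff atMost_iff mult_zero_left)
  qed (auto simp: degree_map_poly_le)
  finally show ?thesis by (simp add: coeff_map_poly)
qed

lemma monic_root_power_eq:
  fixes x :: "'k::comm_ring_1"
  assumes "lead_coeff p = 1" "poly (map_poly of_int p) x = 0"
  shows "x ^ degree p = - (\<Sum>i<degree p. of_int (coeff p i) * x ^ i)"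
proof -
  have "0 = (\<Sum>i\<le>degree p. of_int (coeff p i) * x ^ i)"
    using assms(2) poly_of_int_poly_eq_sum by metis
  also have "\<dots> = (\<Sum>i<degree p. of_int (coeff p i) * x ^ i) + x ^ degree p"
    using assms(1) by (simp add: lessThan_Suc_atMost[symmetric])
  finally show ?thesis by (simp add: eq_neg_iff_add_eq_0 add.commute)
qed

lemma monic_root_power_mult_mem:
  fixes x :: "'k::comm_ring_1"
  assumes p: "lead_coeff p = 1" "poly (map_poly of_int p) x = 0"
    and low: "\<And>i. i < degree p \<Longrightarrow> x ^ i * c \<in> int_span I g"
  shows "x ^ a * c \<in> int_span I g"
proof (induction a rule: less_induct)
  case (less a)
  show ?case
  proof (cases "a < degree p")
    case False
    hence "x ^ a = x ^ (a - degree p) * x ^ degree p" by (simp add: power_add[symmetric])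
    hence "x ^ a * c = - (\<Sum>i<degree p. of_int (coeff p i) * (x ^ (a - degree p + i) * c))"
      unfolding monic_root_power_eq[OF p]
      by (simp add: sum_distrib_left sum_distrib_right power_add algebra_simps sum_negf)
    also have "\<dots> \<in> int_span I g"
      using less False by (intro int_span_uminus int_span_sum int_span_of_int_mult) auto
    finally show ?thesis .
  qed (use low in auto)
qed

text \<open>If x and y are roots of monic polynomials of degrees d and e, the monomials x^i y^j with
  i < d and j < e span a subring containing x and y, to which the determinant trick applies.\<close>

lemma maximal_order_closed:
  fixes x y :: "'k::comm_ring_1"
  assumes "x \<in> maximal_order" "y \<in> maximal_order"
  shows "x + y \<in> maximal_order \<and> x * y \<in> maximal_order \<and> - x \<in> maximal_order"
proof -
  obtain p where p: "lead_coeff p = 1" "poly (map_poly of_int p) x = 0"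
    using assms(1) unfolding maximal_order_def by blast
  obtain q where q: "lead_coeff q = 1" "poly (map_poly of_int q) y = 0"
    using assms(2) unfolding maximal_order_def by blast
  define I where "I = {..<degree p} \<times> {..<degree q}"
  define g where "g = (\<lambda>(i, j). x ^ i * y ^ j)"
  define S where "S = int_span I g"
  have finI: "finite I" unfolding I_def by simp
  have low: "x ^ a * y ^ b \<in> S" if "b < degree q" for a b
  proof (unfold S_def, rule monic_root_power_mult_mem[OF p])
    fix i assume "i < degree p"
    thus "x ^ i * y ^ b \<in> int_span I g"
      using int_span_generator[OF finI, of "(i, b)" g] that unfolding I_def g_def by simp
  qed
  have monomial: "x ^ a * y ^ b \<in> S" for a b
    using monic_root_power_mult_mem[OF q, of "x ^ a" I g b] low
    unfolding S_def by (simp add: mult.commute)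
  have mulS: "u * v \<in> S" if "u \<in> S" "v \<in> S" for u v
  proof (rule int_span_mult[OF finI _ that[unfolded S_def], folded S_def])
    fix i j assume "i \<in> I" "j \<in> I"
    then obtain a b a' b' where "i = (a, b)" "j = (a', b')" by fastforce
    thus "g i * g j \<in> S" using monomial[of "a + a'" "b + b'"]
      unfolding g_def by (simp add: power_add algebra_simps)
  qed
  have integral: "z \<in> maximal_order" if z: "z \<in> S" for z
  proof (rule determinant_trick_int_span[OF finI])
    show "1 \<in> int_span I g" using monomial[of 0 0] unfolding S_def by simp
    show "z * g i \<in> int_span I g" if "i \<in> I" for i
      using mulS[OF z] int_span_generator[OF finI that, of g] unfolding S_def by blast
  qed
  have "x \<in> S" "y \<in> S" using monomial[of 1 0] monomial[of 0 1] by simp_all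
  thus ?thesis
    using integral mulS[OF \<open>x \<in> S\<close> \<open>y \<in> S\<close>] int_span_add[of x I g y] int_span_uminus[of x I g]
    unfolding S_def by blast
qed

lemma subring1_one: "subring1 R \<Longrightarrow> 1 \<in> R"
  unfolding subring1_def by blast

lemma subring1_add: "subring1 R \<Longrightarrow> x \<in> R \<Longrightarrow> y \<in> R \<Longrightarrow> x + y \<in> R"
  unfolding subring1_def by blast

lemma subring1_diff: "subring1 R \<Longrightarrow> x \<in> R \<Longrightarrow> y \<in> R \<Longrightarrow> x - y \<in> R"
  unfolding subring1_def by blast

lemma subring1_mult: "subring1 R \<Longrightarrow> x \<in> R \<Longrightarrow> y \<in> R \<Longrightarrow> x * y \<in> R"
  unfolding subring1_def by blast

lemma subring1_0: "subring1 R \<Longrightarrow> 0 \<in> R"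
  unfolding subring1_def by (metis diff_self)

lemma subring1_uminus: "subring1 R \<Longrightarrow> x \<in> R \<Longrightarrow> - x \<in> R"
  using subring1_0[of R] unfolding subring1_def by (metis diff_0)

lemma subring1_of_int: "subring1 R \<Longrightarrow> of_int m \<in> R"
proof (induction m rule: int_induct[where k = 0])
  case base thus ?case using subring1_0 by simp
next
  case (step1 i) thus ?case unfolding subring1_def by simp
next
  case (step2 i) thus ?case unfolding subring1_def by simp
qed

lemma subring1_of_int_mult: "subring1 R \<Longrightarrow> x \<in> R \<Longrightarrow> of_int m * x \<in> R"
  using subring1_of_int[of R m] unfolding subring1_def by blast

lemma subring1_zspan3:
  assumes "subring1 R" "a \<in> R" "b \<in> R" "c \<in> R"
  shows "zspan3 a b c \<subseteq> R"
  using assms subring1_of_int_mult[OF assms(1)] unfolding zspan3_def subring1_def by blast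

lemma subring1_scaled_closed:
  assumes R: "subring1 R" and "u \<in> (\<lambda>y. c * y) ` R" "v \<in> (\<lambda>y. c * y) ` R"
  shows "u + v \<in> (\<lambda>y. c * y) ` R" "- u \<in> (\<lambda>y. c * y) ` R"
proof -
  obtain u' v' where uv: "u' \<in> R" "v' \<in> R" "u = c * u'" "v = c * v'" using assms(2,3) by blast
  show "u + v \<in> (\<lambda>y. c * y) ` R"
    using uv subring1_add[OF R uv(1,2)] by (auto intro!: image_eqI[of _ _ "u' + v'"] simp: distrib_left)
  show "- u \<in> (\<lambda>y. c * y) ` R"
    using uv subring1_uminus[OF R uv(1)] by (auto intro!: image_eqI[of _ _ "- u'"])
qed

lemma subring1_maximal_order: "subring1 maximal_order"
proof -
  have "1 \<in> (maximal_order :: 'a::comm_ring_1 set)"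
    unfolding maximal_order_def by (rule CollectI, rule exI[of _ "[:-1, 1:]"]) simp
  moreover have "x - y \<in> maximal_order" if "x \<in> maximal_order" "y \<in> maximal_order" for x y :: 'a
    using maximal_order_closed[OF that(1) maximal_order_closed[OF that(2) that(2), THEN conjunct2,
        THEN conjunct2]] by simp
  ultimately show ?thesis
    unfolding subring1_def using maximal_order_closed by blast
qed

lemma subring1_coset_eq_iff:
  assumes "subring1 R"
  shows "(\<lambda>n. y + n) ` R = (\<lambda>n. y' + n) ` R \<longleftrightarrow> y - y' \<in> R"
proof
  assume "(\<lambda>n. y + n) ` R = (\<lambda>n. y' + n) ` R"
  moreover have "y \<in> (\<lambda>n. y + n) ` R" using subring1_0[OF assms] by force
  ultimately obtain n where "n \<in> R" "y = y' + n" by auto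
  thus "y - y' \<in> R" by simp
next
  assume d: "y - y' \<in> R"
  have "y + n \<in> (\<lambda>n. y' + n) ` R" if "n \<in> R" for n
    using assms d that unfolding subring1_def by (intro image_eqI[of _ _ "(y - y') + n"]) auto
  moreover have "y' + n \<in> (\<lambda>n. y + n) ` R" if "n \<in> R" for n
    using assms d that unfolding subring1_def by (intro image_eqI[of _ _ "n - (y - y')"]) auto
  ultimately show "(\<lambda>n. y + n) ` R = (\<lambda>n. y' + n) ` R" by blast
qed

section \<open>Etale algebras and integrality of rationals\<close>

lemma vector_space_of_int_invertible:
  fixes scale :: "rat \<Rightarrow> 'k::comm_ring_1 \<Rightarrow> 'k"
  assumes "vector_space scale" "n \<noteq> 0"
  shows "\<exists>u. of_int n * u = (1::'k)"
proof -
  interpret vector_space scale by (rule assms(1))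
  have of_nat: "scale (of_nat m) x = of_nat m * x" for m x
    by (induction m) (simp_all add: scale_left_distrib distrib_right)
  have of_int: "scale (of_int m) x = of_int m * x" for m x
    by (cases m rule: int_cases2) (simp_all add: of_nat scale_minus_left)
  have "of_int n * scale (1 / of_int n) 1 = scale (of_int n * (1 / of_int n)) 1"
    by (simp add: of_int[symmetric])
  also have "\<dots> = 1" using assms(2) by simp
  finally show ?thesis by blast
qed

lemma direct_sum_of_fields_reduced:
  fixes w :: "'k::comm_ring_1" and E :: "'k set"
  assumes "direct_sum_of_fields E" "w * w = 0"
  shows "w = 0"
proof -
  have zero: "e * w = 0" if e: "e \<in> E" for e
  proof (rule ccontr)
    assume ne: "e * w \<noteq> 0"
    then obtain y where y: "(e * w) * (e * y) = e"
      using assms(1) e unfolding direct_sum_of_fields_def by blast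
    have "e * w = ((e * w) * (e * y)) * (e * w)"
      using assms(1) e y unfolding direct_sum_of_fields_def by (metis mult.assoc)
    also have "\<dots> = (e * e * e * y) * (w * w)" by (simp add: algebra_simps)
    also have "\<dots> = 0" using assms(2) by simp
    finally show False using ne by simp
  qed
  have "w = sum id E * w" using assms(1) unfolding direct_sum_of_fields_def by simp
  also have "\<dots> = 0" using zero by (simp add: sum_distrib_right)
  finally show ?thesis .
qed

lemma of_int_mult_cancel:
  fixes w :: "'k::comm_ring_1"
  assumes inv: "\<And>n::int. n \<noteq> 0 \<Longrightarrow> \<exists>u::'k. of_int n * u = 1"
    and "n \<noteq> 0" "of_int n * w = 0"
  shows "w = 0"
  using inv[OF assms(2)] assms(3) by (metis mult.assoc mult.commute mult_1 mult_zero_right)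

lemma of_int_injective:
  assumes inv: "\<And>n::int. n \<noteq> 0 \<Longrightarrow> \<exists>u::'k::comm_ring_1. of_int n * u = 1"
    and nontriv: "(1::'k) \<noteq> 0" and "of_int a = (of_int b :: 'k)"
  shows "a = b"
  using of_int_mult_cancel[OF inv, of "a - b" 1] nontriv assms(3) by auto

lemma monic_homogeneous_root_denominator_unit:
  fixes p :: "int poly"
  assumes "lead_coeff p = 1" "coprime N m"
    and root: "(\<Sum>i\<le>degree p. coeff p i * m ^ i * N ^ (degree p - i)) = 0"
  shows "is_unit N"
proof -
  let ?d = "degree p"
  have "(\<Sum>i<?d. coeff p i * m ^ i * N ^ (?d - i)) + m ^ ?d = 0"
    using root assms(1) by (simp add: lessThan_Suc_atMost[symmetric])
  hence "m ^ ?d = - (\<Sum>i<?d. coeff p i * m ^ i * N ^ (?d - i))"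
    by (simp add: eq_neg_iff_add_eq_0 add.commute)
  moreover have "N dvd (\<Sum>i<?d. coeff p i * m ^ i * N ^ (?d - i))"
    by (rule dvd_sum) simp
  ultimately have "N dvd m ^ ?d" by simp
  moreover have "coprime N (m ^ ?d)" using assms(2) by simp
  ultimately show ?thesis using coprime_common_divisor[of N "m ^ ?d" N] by simp
qed

lemma dvd_if_of_int_mult_mem_maximal_order:
  fixes z :: "'k::comm_ring_1"
  assumes inv: "\<And>n::int. n \<noteq> 0 \<Longrightarrow> \<exists>u::'k. of_int n * u = 1"
    and nontriv: "(1::'k) \<noteq> 0"
    and z: "z \<in> maximal_order" and N: "N \<noteq> 0" and e: "of_int N * z = of_int m"
  shows "N dvd m"
proof -
  obtain g N1 m1 where N1: "N = g * N1" and m1: "m = g * m1" and cop: "coprime N1 m1"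
    and g: "g \<noteq> 0"
    using gcd_coprime_exists[of N m] N by (metis gcd_eq_0_iff mult.commute)
  have "of_int g * (of_int N1 * z - of_int m1) = (0::'k)"
    using e unfolding N1 m1 by (simp add: algebra_simps)
  hence e1: "of_int N1 * z = (of_int m1 :: 'k)"
    using of_int_mult_cancel[OF inv g] by (metis right_minus_eq)
  obtain p where p: "lead_coeff p = 1" "poly (map_poly of_int p) z = (0::'k)"
    using z unfolding maximal_order_def by blast
  let ?d = "degree p"
  have "0 = of_int N1 ^ ?d * (\<Sum>i\<le>?d. of_int (coeff p i) * z ^ i :: 'k)"
    using p(2) poly_of_int_poly_eq_sum[of p z] by simp
  also have "\<dots> = (\<Sum>i\<le>?d. of_int (coeff p i) * (of_int N1 * z) ^ i * of_int N1 ^ (?d - i))"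
    unfolding sum_distrib_left
  proof (rule sum.cong[OF refl])
    fix i assume "i \<in> {..?d}"
    hence "(of_int N1 :: 'k) ^ ?d = of_int N1 ^ i * of_int N1 ^ (?d - i)"
      by (metis le_add_diff_inverse atMost_iff power_add)
    thus "of_int N1 ^ ?d * (of_int (coeff p i) * z ^ i) =
        of_int (coeff p i) * (of_int N1 * z) ^ i * of_int N1 ^ (?d - i)"
      by (simp add: power_mult_distrib algebra_simps)
  qed
  also have "\<dots> = of_int (\<Sum>i\<le>?d. coeff p i * m1 ^ i * N1 ^ (?d - i))"
    unfolding e1 by simp
  finally have "(\<Sum>i\<le>?d. coeff p i * m1 ^ i * N1 ^ (?d - i)) = 0"
    using of_int_injective[OF inv nontriv] by (metis of_int_0)
  hence "is_unit N1" using monic_homogeneous_root_denominator_unit[OF p(1) cop] by blast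
  thus ?thesis unfolding N1 m1 by (simp add: mult_dvd_mono unit_imp_dvd)
qed

section \<open>Sublattices of Z^2\<close>

lemma int_subgroup_cyclic:
  fixes G :: "int set"
  assumes diff: "\<And>a b. a \<in> G \<Longrightarrow> b \<in> G \<Longrightarrow> a - b \<in> G" and "n \<in> G" "n > 0"
  obtains d where "d > 0" "d \<in> G" "\<And>b. b \<in> G \<Longrightarrow> d dvd b"
proof -
  have zero: "0 \<in> G" using diff[OF \<open>n \<in> G\<close> \<open>n \<in> G\<close>] by simp
  have mult: "k * a \<in> G" if "a \<in> G" for k a
  proof (induction k rule: int_induct[where k = 0])
    case (step1 i) thus ?case using diff[OF step1(2) diff[OF zero that]] by (simp add: algebra_simps)
  next
    case (step2 i) thus ?case using diff[OF step2(2) that] by (simp add: algebra_simps)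
  qed (simp add: zero)
  define S where "S = {k::nat. k > 0 \<and> int k \<in> G}"
  define d where "d = (LEAST k. k \<in> S)"
  have "nat n \<in> S" using assms unfolding S_def by simp
  hence dS: "d \<in> S" unfolding d_def by (rule LeastI)
  have "int d dvd b" if b: "b \<in> G" for b
  proof -
    have "b mod int d = b - (b div int d) * int d" by (simp add: minus_div_mult_eq_mod)
    hence "b mod int d \<in> G" using diff[OF b mult] dS unfolding S_def by simp
    moreover have "0 \<le> b mod int d" "b mod int d < int d" using dS unfolding S_def by simp_all
    ultimately have "b mod int d = 0"
    proof (rule_tac ccontr)
      assume "b mod int d \<in> G" "0 \<le> b mod int d" "b mod int d < int d" "b mod int d \<noteq> 0"
      hence "nat (b mod int d) \<in> S" unfolding S_def by simp
      hence "d \<le> nat (b mod int d)" unfolding d_def by (rule Least_le)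
      thus False using \<open>0 \<le> b mod int d\<close> \<open>b mod int d < int d\<close> by (simp add: le_nat_iff)
    qed
    thus ?thesis by (simp add: dvd_eq_mod_eq_0)
  qed
  thus ?thesis using that[of "int d"] dS unfolding S_def by simp
qed

lemma int_lattice2_hermite_basis:
  fixes P :: "int \<Rightarrow> int \<Rightarrow> bool"
  assumes add: "\<And>a b c d. P a b \<Longrightarrow> P c d \<Longrightarrow> P (a + c) (b + d)"
    and neg: "\<And>a b. P a b \<Longrightarrow> P (- a) (- b)"
    and N: "N > 0" "P N 0" "P 0 N"
  obtains d1 d2 x where "d1 > 0" "d2 > 0" "\<And>a b. P a b \<longleftrightarrow> (\<exists>i j. a = i * d1 + j * x \<and> b = j * d2)"
proof -
  have sub: "P (a - c) (b - d)" if "P a b" "P c d" for a b c d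
    using add[OF that(1) neg[OF that(2)]] by simp
  have zero: "P 0 0" using sub[OF N(2) N(2)] by simp
  have mult: "P (k * a) (k * b)" if "P a b" for k a b
  proof (induction k rule: int_induct[where k = 0])
    case (step1 i) thus ?case using add[OF step1(2) that] by (simp add: algebra_simps)
  next
    case (step2 i) thus ?case using sub[OF step2(2) that] by (simp add: algebra_simps)
  qed (simp add: zero)
  have "b - b' \<in> {b. \<exists>a. P a b}" if mem: "b \<in> {b. \<exists>a. P a b}" "b' \<in> {b. \<exists>a. P a b}" for b b'
  proof -
    obtain a a' where "P a b" "P a' b'" using mem by blast
    thus ?thesis using sub by blast
  qed
  then obtain d2 where d2: "d2 > 0" "d2 \<in> {b. \<exists>a. P a b}" "\<And>b. b \<in> {b. \<exists>a. P a b} \<Longrightarrow> d2 dvd b"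
    by (rule int_subgroup_cyclic[where n = N]) (use N in auto)
  then obtain x where x: "P x d2" by blast
  have "a - a' \<in> {a. P a 0}" if "a \<in> {a. P a 0}" "a' \<in> {a. P a 0}" for a a'
    using that sub[of a 0 a' 0] by simp
  then obtain d1 where d1: "d1 > 0" "d1 \<in> {a. P a 0}" "\<And>a. a \<in> {a. P a 0} \<Longrightarrow> d1 dvd a"
    by (rule int_subgroup_cyclic[where n = N]) (use N in auto)
  have "P a b \<longleftrightarrow> (\<exists>i j. a = i * d1 + j * x \<and> b = j * d2)" for a b
  proof
    assume Pab: "P a b"
    have "d2 dvd b" using d2(3)[of b] Pab by blast
    then obtain j where j: "b = j * d2" by (metis dvd_def mult.commute)
    have "P (a - j * x) 0" using sub[OF Pab mult[OF x, of j]] j by simp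
    hence "d1 dvd a - j * x" using d1(3) by blast
    then obtain i where "a - j * x = i * d1" by (metis dvd_def mult.commute)
    thus "\<exists>i j. a = i * d1 + j * x \<and> b = j * d2" using j by (intro exI[of _ i] exI[of _ j]) simp
  next
    assume "\<exists>i j. a = i * d1 + j * x \<and> b = j * d2"
    then obtain i j where "a = i * d1 + j * x" "b = j * d2" by blast
    thus "P a b" using add[OF mult[of d1 0 i] mult[OF x, of j]] d1(2) by simp
  qed
  thus ?thesis by (rule that[OF d1(1) d2(1)])
qed

text \<open>When the diagonal entries are coprime, the Hermite lattice has elementary divisors 1 and
  d1 d2: it is spanned by d1 d2 (nu, -1) and (X, d2), and these two vectors have determinant 1.\<close>

lemma coprime_hermite_lattice_cyclic:
  fixes d1 d2 x :: int
  assumes "coprime d1 d2"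
  obtains X nu where "X + nu * d2 = 1"
    "\<And>a b. (\<exists>i j. a = i * d1 + j * x \<and> b = j * d2) \<longleftrightarrow>
      (\<exists>al be. a = al * (d1 * d2) * nu + be * X \<and> b = - al * (d1 * d2) + be * d2)"
proof -
  obtain u v where uv: "u * d1 + v * d2 = 1" using bezout_int[of d1 d2] assms by auto
  define t where "t = (1 - x) * u"
  define X where "X = x + t * d1"
  define nu where "nu = (1 - x) * v"
  have rel: "X + nu * d2 = 1"
  proof -
    have "X + nu * d2 = x + (1 - x) * (u * d1 + v * d2)"
      unfolding X_def t_def nu_def by (simp add: algebra_simps)
    thus ?thesis using uv by simp
  qed
  have "(\<exists>i j. a = i * d1 + j * x \<and> b = j * d2) \<longleftrightarrow>
      (\<exists>al be. a = al * (d1 * d2) * nu + be * X \<and> b = - al * (d1 * d2) + be * d2)" for a b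
  proof
    assume "\<exists>i j. a = i * d1 + j * x \<and> b = j * d2"
    then obtain i j where ij: "a = i * d1 + j * x" "b = j * d2" by blast
    define al where "al = i - t * j"
    define be where "be = nu * b + a"
    have "- al * (d1 * d2) + be * d2 = j * d2 * (X + nu * d2)"
      unfolding al_def be_def X_def ij by (simp add: algebra_simps)
    hence "b = - al * (d1 * d2) + be * d2" using rel ij(2) by simp
    moreover have "al * (d1 * d2) * nu + be * X = a * (X + nu * d2) + nu * j * d2 * (X - t * d1 - x)"
      unfolding al_def be_def ij by (simp add: algebra_simps)
    hence "a = al * (d1 * d2) * nu + be * X" using rel by (simp add: X_def)
    ultimately show "\<exists>al be. a = al * (d1 * d2) * nu + be * X \<and> b = - al * (d1 * d2) + be * d2"
      by blast
  next
    assume "\<exists>al be. a = al * (d1 * d2) * nu + be * X \<and> b = - al * (d1 * d2) + be * d2"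
    then obtain al be where "a = al * (d1 * d2) * nu + be * X" "b = - al * (d1 * d2) + be * d2"
      by blast
    thus "\<exists>i j. a = i * d1 + j * x \<and> b = j * d2"
      by (intro exI[of _ "al * (d2 * nu + x) + be * t"] exI[of _ "be - al * d1"])
        (simp add: X_def algebra_simps)
  qed
  thus ?thesis using that rel by blast
qed

lemma coprime_if_squarefree_mult:
  fixes d1 d2 :: int
  assumes "squarefree (nat d1 * nat d2)" "d1 > 0" "d2 > 0"
  shows "coprime d1 d2"
proof -
  have "gcd d1 d2 * gcd d1 d2 dvd d1 * d2" by (simp add: mult_dvd_mono)
  hence "int (nat (gcd d1 d2) ^ 2) dvd int (nat d1 * nat d2)"
    using assms(2,3) by (simp add: power2_eq_square nat_mult_distrib[symmetric])
  hence "nat (gcd d1 d2) ^ 2 dvd nat d1 * nat d2" by (simp only: of_nat_dvd_iff)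
  hence "nat (gcd d1 d2) dvd 1" using squarefreeD[OF assms(1)] by blast
  thus ?thesis by (simp add: coprime_iff_gcd_eq_1)
qed

lemma abs_mult_less_imp_eq_0:
  fixes d j :: int
  assumes "d > 0" "\<bar>j * d\<bar> < d"
  shows "j = 0"
proof (rule ccontr)
  assume "j \<noteq> 0"
  hence "1 * d \<le> \<bar>j\<bar> * d" using assms(1) by (intro mult_right_mono) auto
  thus False using assms by (simp add: abs_mult)
qed

section \<open>Integral bases of rank three\<close>

lemma zspan3_iff: "x \<in> zspan3 a b c \<longleftrightarrow> (\<exists>u v w. x = of_int u * a + of_int v * b + of_int w * c)"
  unfolding zspan3_def by blast

lemma zspan3_generators: "a \<in> zspan3 a b c" "b \<in> zspan3 a b c" "c \<in> zspan3 a b c"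
  unfolding zspan3_iff
  by (rule exI[of _ 1], rule exI[of _ 0], rule exI[of _ 0], simp)
    (rule exI[of _ 0], rule exI[of _ 1], rule exI[of _ 0], simp,
     rule exI[of _ 0], rule exI[of _ 0], rule exI[of _ 1], simp)

lemma zspan3_of_int_mult: "x \<in> zspan3 a b c \<Longrightarrow> of_int m * x \<in> zspan3 a b c"
proof -
  assume "x \<in> zspan3 a b c"
  then obtain u v w where "x = of_int u * a + of_int v * b + of_int w * c" unfolding zspan3_iff by blast
  hence "of_int m * x = of_int (m * u) * a + of_int (m * v) * b + of_int (m * w) * c"
    by (simp add: algebra_simps)
  thus ?thesis unfolding zspan3_iff by blast
qed

lemma zspan3_subset:
  assumes "a' \<in> zspan3 a b c" "b' \<in> zspan3 a b c" "c' \<in> zspan3 a b c"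
  shows "zspan3 a' b' c' \<subseteq> zspan3 a b c"
proof
  fix x assume "x \<in> zspan3 a' b' c'"
  then obtain u v w where x: "x = of_int u * a' + of_int v * b' + of_int w * c'"
    unfolding zspan3_iff by blast
  obtain u1 v1 w1 u2 v2 w2 u3 v3 w3 where
    "a' = of_int u1 * a + of_int v1 * b + of_int w1 * c"
    "b' = of_int u2 * a + of_int v2 * b + of_int w2 * c"
    "c' = of_int u3 * a + of_int v3 * b + of_int w3 * c"
    using assms unfolding zspan3_iff by blast
  hence "x = of_int (u * u1 + v * u2 + w * u3) * a + of_int (u * v1 + v * v2 + w * v3) * b
      + of_int (u * w1 + v * w2 + w * w3) * c"
    unfolding x by (simp add: algebra_simps)
  thus "x \<in> zspan3 a b c" unfolding zspan3_iff by blast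
qed

lemma zindep3_coeffs_eq:
  assumes "zindep3 a b c"
    and "of_int u * a + of_int v * b + of_int w * c = of_int u' * a + of_int v' * b + of_int w' * c"
  shows "u = u' \<and> v = v' \<and> w = w'"
proof -
  have "of_int (u - u') * a + of_int (v - v') * b + of_int (w - w') * c = 0"
    using assms(2) by (simp add: algebra_simps)
  with assms(1) show ?thesis unfolding zindep3_def by fastforce
qed

lemma zbasis3_mem: "zbasis3 S a b c \<Longrightarrow> a \<in> S \<and> b \<in> S \<and> c \<in> S"
  unfolding zbasis3_def using zspan3_generators by blast

lemma zbasis3_coords:
  assumes "zbasis3 M 1 w th" "x \<in> M"
  obtains a b c where "x = of_int a * 1 + of_int b * w + of_int c * th"
proof -
  have "x \<in> zspan3 1 w th" using assms unfolding zbasis3_def by simp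
  thus ?thesis using that unfolding zspan3_iff by blast
qed

lemma zindep3_scale:
  assumes "zindep3 1 a b" "f \<noteq> 0"
  shows "zindep3 1 (of_int f * a) (b::'k::comm_ring_1)"
  unfolding zindep3_def
proof (intro allI impI)
  fix u v w :: int
  assume "of_int u * 1 + of_int v * (of_int f * a) + of_int w * b = (0::'k)"
  hence "of_int u * 1 + of_int (v * f) * a + of_int w * b = (0::'k)" by (simp add: algebra_simps)
  hence "u = 0 \<and> v * f = 0 \<and> w = 0" using assms(1) unfolding zindep3_def by blast
  thus "u = 0 \<and> v = 0 \<and> w = 0" using assms(2) by simp
qed

lemma zindep3_triangular:
  fixes y2 y3 :: "'k::comm_ring_1"
  assumes ind: "zindep3 1 a b" and "N \<noteq> 0" "d1 \<noteq> 0" "d2 \<noteq> 0"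
    and y2: "of_int N * y2 = of_int c2 + of_int d1 * a"
    and y3: "of_int N * y3 = of_int c3 + of_int x * a + of_int d2 * b"
  shows "zindep3 1 y2 y3"
  unfolding zindep3_def
proof (intro allI impI)
  fix u v w :: int
  assume h: "of_int u * 1 + of_int v * y2 + of_int w * y3 = (0::'k)"
  have "of_int (u * N + v * c2 + w * c3) * 1 + of_int (v * d1 + w * x) * a + of_int (w * d2) * b
      = of_int N * (of_int u * 1 + of_int v * y2 + of_int w * y3)"
    unfolding distrib_left mult.left_commute[of "of_int N" _ y2] mult.left_commute[of "of_int N" _ y3]
      y2 y3 by (simp add: algebra_simps)
  also have "\<dots> = 0" using h by simp
  finally have "u * N + v * c2 + w * c3 = 0 \<and> v * d1 + w * x = 0 \<and> w * d2 = 0"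
    using ind unfolding zindep3_def by blast
  thus "u = 0 \<and> v = 0 \<and> w = 0" using assms(2-4) by auto
qed

definition det3 :: "int \<Rightarrow> int \<Rightarrow> int \<Rightarrow> int \<Rightarrow> int \<Rightarrow> int \<Rightarrow> int \<Rightarrow> int \<Rightarrow> int \<Rightarrow> int" where
  "det3 a b c d e f g h i = a * (e * i - f * h) - b * (d * i - f * g) + c * (d * h - e * g)"

lemma zbasis3_unimodular_change:
  fixes a b c :: "'k::comm_ring_1"
  assumes B: "zbasis3 S a b c"
    and a': "a' = of_int ma * a + of_int mb * b + of_int mc * c"
    and b': "b' = of_int md * a + of_int me * b + of_int mf * c"
    and c': "c' = of_int mg * a + of_int mh * b + of_int mi * c"
    and unimodular: "\<bar>det3 ma mb mc md me mf mg mh mi\<bar> = 1"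
  shows "zbasis3 S a' b' c'"
proof -
  define D where "D = det3 ma mb mc md me mf mg mh mi"
  have "D * D = 1" using unimodular abs_mult_self_eq[of D] unfolding D_def by simp
  hence DD: "of_int D * (of_int D * x) = x" for x :: 'k
    by (metis mult.assoc mult_1 of_int_1 of_int_mult)
  have "of_int D * a \<in> zspan3 a' b' c'" "of_int D * b \<in> zspan3 a' b' c'"
    "of_int D * c \<in> zspan3 a' b' c'"
    unfolding zspan3_iff a' b' c' D_def det3_def
    by (rule exI[of _ "me*mi - mf*mh"], rule exI[of _ "-(mb*mi - mc*mh)"],
        rule exI[of _ "mb*mf - mc*me"], simp add: algebra_simps)
      (rule exI[of _ "-(md*mi - mf*mg)"], rule exI[of _ "ma*mi - mc*mg"],
        rule exI[of _ "-(ma*mf - mc*md)"], simp add: algebra_simps,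
       rule exI[of _ "md*mh - me*mg"], rule exI[of _ "-(ma*mh - mb*mg)"],
        rule exI[of _ "ma*me - mb*md"], simp add: algebra_simps)
  from this[THEN zspan3_of_int_mult, of D]
  have "a \<in> zspan3 a' b' c'" "b \<in> zspan3 a' b' c'" "c \<in> zspan3 a' b' c'"
    by (simp_all only: DD)
  hence "zspan3 a b c \<subseteq> zspan3 a' b' c'" by (rule zspan3_subset)
  moreover have "zspan3 a' b' c' \<subseteq> zspan3 a b c"
    by (rule zspan3_subset) (unfold zspan3_iff a' b' c', blast+)
  moreover have "zindep3 a' b' c'"
    unfolding zindep3_def
  proof (intro allI impI)
    fix u v w :: int
    assume "of_int u * a' + of_int v * b' + of_int w * c' = 0"
    hence "of_int (u*ma + v*md + w*mg) * a + of_int (u*mb + v*me + w*mh) * b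
        + of_int (u*mc + v*mf + w*mi) * c = 0"
      unfolding a' b' c' by (simp add: algebra_simps)
    hence e: "u*ma + v*md + w*mg = 0" "u*mb + v*me + w*mh = 0" "u*mc + v*mf + w*mi = 0"
      using B unfolding zbasis3_def zindep3_def by blast+
    have "u * D = (u*ma + v*md + w*mg) * (me*mi - mf*mh) - (u*mb + v*me + w*mh) * (md*mi - mf*mg)
        + (u*mc + v*mf + w*mi) * (md*mh - me*mg)"
      "v * D = - (u*ma + v*md + w*mg) * (mb*mi - mc*mh) + (u*mb + v*me + w*mh) * (ma*mi - mc*mg)
        - (u*mc + v*mf + w*mi) * (ma*mh - mb*mg)"
      "w * D = (u*ma + v*md + w*mg) * (mb*mf - mc*me) - (u*mb + v*me + w*mh) * (ma*mf - mc*md)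
        + (u*mc + v*mf + w*mi) * (ma*me - mb*md)"
      unfolding D_def det3_def by (simp_all add: algebra_simps)
    thus "u = 0 \<and> v = 0 \<and> w = 0" using e unimodular unfolding D_def by auto
  qed
  ultimately show ?thesis using B unfolding zbasis3_def by blast
qed

lemma primitive_vector_unimodular_completion:
  fixes u v w :: int
  assumes "gcd u (gcd v w) = 1"
  obtains md me mf mg mh mi where "\<bar>det3 u v w md me mf mg mh mi\<bar> = 1"
proof (cases "gcd u v = 0")
  case True
  hence "u = 0" "v = 0" by auto
  hence "\<bar>det3 u v w 1 0 0 0 1 0\<bar> = 1" using assms by (simp add: det3_def)
  thus ?thesis by (rule that)
next
  case False
  define g where "g = gcd u v"
  obtain u' v' where u': "u = g * u'" and v': "v = g * v'"
    unfolding g_def by (meson gcd_dvd1 gcd_dvd2 dvdE)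
  obtain p q where "p * u + q * v = g" unfolding g_def using bezout_int by blast
  hence "g * (p * u' + q * v' - 1) = 0" using u' v' by (simp add: algebra_simps)
  moreover have "g \<noteq> 0" using False unfolding g_def .
  ultimately have pq: "p * u' + q * v' = 1" by simp
  have "gcd g w = 1" using assms unfolding g_def by (simp add: gcd.assoc)
  then obtain be al where bal: "be * g + al * w = 1" using bezout_int[of g w] by auto
  have "det3 u v w (- q) p 0 (- al * u') (- al * v') be = (be * g + al * w) * (p * u' + q * v')"
    unfolding u' v' by (simp add: det3_def algebra_simps)
  hence "\<bar>det3 u v w (- q) p 0 (- al * u') (- al * v') be\<bar> = 1" using bal pq by simp
  thus ?thesis by (rule that)
qed

definition coord_lattice :: "'k::comm_ring_1 set \<Rightarrow> 'k \<Rightarrow> 'k \<Rightarrow> int \<Rightarrow> int \<Rightarrow> bool" where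
  "coord_lattice M a b k1 k2 \<longleftrightarrow> (\<exists>k0. of_int k0 + of_int k1 * a + of_int k2 * b \<in> M)"

lemma coord_lattice_hermite_basis:
  fixes M :: "'k::comm_ring_1 set"
  assumes add: "\<And>x y. x \<in> M \<Longrightarrow> y \<in> M \<Longrightarrow> x + y \<in> M"
    and uminus: "\<And>x. x \<in> M \<Longrightarrow> - x \<in> M"
    and N: "N > 0" "coord_lattice M a b N 0" "coord_lattice M a b 0 N"
  obtains d1 d2 x where "d1 > 0" "d2 > 0"
    "\<And>k1 k2. coord_lattice M a b k1 k2 \<longleftrightarrow> (\<exists>i j. k1 = i * d1 + j * x \<and> k2 = j * d2)"
proof (rule int_lattice2_hermite_basis[OF _ _ N])
  fix k1 k2 m1 m2
  assume "coord_lattice M a b k1 k2" "coord_lattice M a b m1 m2"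
  then obtain k0 m0 where "of_int k0 + of_int k1 * a + of_int k2 * b \<in> M"
    "of_int m0 + of_int m1 * a + of_int m2 * b \<in> M" unfolding coord_lattice_def by blast
  from add[OF this] have "of_int (k0 + m0) + of_int (k1 + m1) * a + of_int (k2 + m2) * b \<in> M"
    by (simp add: algebra_simps)
  thus "coord_lattice M a b (k1 + m1) (k2 + m2)" unfolding coord_lattice_def by blast
next
  fix k1 k2
  assume "coord_lattice M a b k1 k2"
  then obtain k0 where "of_int k0 + of_int k1 * a + of_int k2 * b \<in> M"
    unfolding coord_lattice_def by blast
  from uminus[OF this] have "of_int (- k0) + of_int (- k1) * a + of_int (- k2) * b \<in> M"
    by (simp add: algebra_simps)
  thus "coord_lattice M a b (- k1) (- k2)" unfolding coord_lattice_def by blast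
qed (use that in blast)

section \<open>Orders of finite squarefree index\<close>

locale cubic_order =
  fixes \<O> :: "'k::comm_ring_1 set"
  assumes cubic_ring: "cubic_ring \<O>"
    and subset_maximal_order: "\<O> \<subseteq> maximal_order"
    and of_int_invertible: "\<And>n::int. n \<noteq> 0 \<Longrightarrow> \<exists>u::'k. of_int n * u = 1"
    and index_nonzero: "group_index maximal_order \<O> \<noteq> 0"
begin

abbreviation \<O>\<^sub>k :: "'k set" where "\<O>\<^sub>k \<equiv> maximal_order"

abbreviation index :: nat where "index \<equiv> group_index \<O>\<^sub>k \<O>"

lemma subring: "subring1 \<O>"
  using cubic_ring unfolding cubic_ring_def by blast

lemma one_neq_zero: "(1::'k) \<noteq> 0"
proof
  assume one: "(1::'k) = 0"
  have zero: "y = 0" for y :: 'k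
  proof -
    have "y = y * 1" by simp
    also have "\<dots> = 0" using one by simp
    finally show ?thesis .
  qed
  obtain a b c where "zindep3 a b (c::'k)"
    using cubic_ring unfolding cubic_ring_def zbasis3_def by blast
  moreover have "of_int 1 * a + of_int 0 * b + of_int 0 * c = (0::'k)" by (rule zero)
  ultimately have "(1::int) = 0" unfolding zindep3_def by blast
  thus False by simp
qed

lemma dvd_if_of_int_mult_mem:
  assumes "z \<in> maximal_order" "N \<noteq> 0" "of_int N * z = (of_int m :: 'k)"
  shows "N dvd m"
  by (rule dvd_if_of_int_mult_mem_maximal_order[OF _ one_neq_zero assms]) (rule of_int_invertible)

lemma eq_of_int_if_of_int_mult_eq:
  assumes z: "z \<in> maximal_order" and N: "N \<noteq> 0" and e: "of_int N * z = (of_int m :: 'k)"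
  obtains t where "z = of_int t"
proof -
  obtain t where t: "m = N * t" using dvd_if_of_int_mult_mem[OF z N e] by blast
  have "of_int N * (z - of_int t) = (0::'k)" using e unfolding t by (simp add: algebra_simps)
  hence "z - of_int t = 0" using of_int_mult_cancel[OF of_int_invertible N] by blast
  hence "z = of_int t" by simp
  thus ?thesis by (rule that)
qed

text \<open>Pigeonhole on the cosets of the index + 1 multiples 0, x, ..., index x.\<close>

lemma small_multiple_mem:
  assumes x: "x \<in> maximal_order"
  obtains d where "1 \<le> d" "d \<le> index" "of_nat d * x \<in> \<O>"
proof -
  define coset where "coset y = (\<lambda>n. y + n) ` \<O>" for y
  define h where "h j = coset (of_nat j * x)" for j :: nat
  have card: "card (coset ` maximal_order) = index" unfolding group_index_def coset_def ..
  hence fin: "finite (coset ` maximal_order)" using index_nonzero by (intro card_ge_0_finite) simp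
  have "of_nat j * x \<in> maximal_order" for j
    using subring1_of_int_mult[OF subring1_maximal_order x, of "int j"] by simp
  hence "h ` {0..index} \<subseteq> coset ` maximal_order" unfolding h_def by blast
  hence "card (h ` {0..index}) \<le> index" using card_mono[OF fin] card by metis
  hence "\<not> inj_on h {0..index}" using card_image[of h "{0..index}"] by auto
  then obtain i j where ij: "i \<in> {0..index}" "j \<in> {0..index}" "i \<noteq> j" "h i = h j"
    unfolding inj_on_def by blast
  obtain a b where ab: "a < b" "b \<le> index" "h b = h a"
  proof (cases "i < j")
    case True thus ?thesis using that[of i j] ij by simp
  next
    case False thus ?thesis using that[of j i] ij by simp
  qed
  hence "of_nat b * x - of_nat a * x \<in> \<O>"
    using subring1_coset_eq_iff[OF subring] unfolding h_def coset_def by blast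
  hence "of_nat (b - a) * x \<in> \<O>" using ab(1) by (simp add: of_nat_diff algebra_simps)
  thus ?thesis using that[of "b - a"] ab by simp
qed

lemma multiple_maximal_order_subset:
  obtains N :: int where "N > 0" "\<And>x. x \<in> maximal_order \<Longrightarrow> of_int N * x \<in> \<O>"
proof (rule that[of "fact index"])
  fix x :: 'k assume "x \<in> maximal_order"
  then obtain d where d: "1 \<le> d" "d \<le> index" "of_nat d * x \<in> \<O>" by (rule small_multiple_mem)
  then obtain k where "fact index = d * k" using dvd_fact by blast
  hence "(fact index :: int) = int k * int d" by (metis of_nat_fact of_nat_mult mult.commute)
  hence "of_int (fact index) * x = of_int (int k) * (of_nat d * x)" by simp
  thus "of_int (fact index) * x \<in> \<O>" using subring1_of_int_mult[OF subring d(3), of "int k"] by simp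
qed simp

lemma primitive_if_one_eq:
  assumes one: "1 = of_int u * a + of_int v * b + of_int w * (c::'k)"
    and "a \<in> maximal_order" "b \<in> maximal_order" "c \<in> maximal_order"
  shows "gcd u (gcd v w) = 1"
proof -
  define g where "g = gcd u (gcd v w)"
  have "g dvd u" "g dvd v" "g dvd w" unfolding g_def by (auto intro: dvd_trans)
  then obtain u' v' w' where u': "u = g * u'" and v': "v = g * v'" and w': "w = g * w'"
    by (elim dvdE)
  have "g \<noteq> 0"
  proof
    assume "g = 0"
    hence "u = 0" "v = 0" "w = 0" unfolding g_def by auto
    with one one_neq_zero show False by simp
  qed
  moreover have "of_int u' * a + of_int v' * b + of_int w' * c \<in> zspan3 a b c"
    unfolding zspan3_iff by blast
  hence "of_int u' * a + of_int v' * b + of_int w' * c \<in> maximal_order"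
    using subring1_zspan3[OF subring1_maximal_order assms(2-4)] by blast
  moreover have "of_int g * (of_int u' * a + of_int v' * b + of_int w' * c) = (of_int 1 :: 'k)"
    using one unfolding u' v' w' by (simp add: algebra_simps)
  ultimately have "g dvd 1" using dvd_if_of_int_mult_mem by blast
  thus ?thesis unfolding g_def by simp
qed

lemma basis_one:
  obtains a b where "zbasis3 \<O> 1 a b"
proof -
  obtain a b c where B: "zbasis3 \<O> a b c" using cubic_ring unfolding cubic_ring_def by blast
  have "1 \<in> zspan3 a b c" using B subring unfolding zbasis3_def subring1_def by blast
  then obtain u v w where one: "1 = of_int u * a + of_int v * b + of_int w * c"
    unfolding zspan3_iff by blast
  have "a \<in> maximal_order" "b \<in> maximal_order" "c \<in> maximal_order"
    using zbasis3_mem[OF B] subset_maximal_order by auto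
  then obtain md me mf mg mh mi where "\<bar>det3 u v w md me mf mg mh mi\<bar> = 1"
    by (rule primitive_vector_unimodular_completion[OF primitive_if_one_eq[OF one]])
  hence "zbasis3 \<O> 1 (of_int md * a + of_int me * b + of_int mf * c)
      (of_int mg * a + of_int mh * b + of_int mi * c)"
    by (intro zbasis3_unimodular_change[OF B one]) auto
  thus ?thesis by (rule that)
qed

lemma maximal_order_basis_one:
  obtains y2 y3 where "zbasis3 \<O>\<^sub>k 1 y2 y3"
proof -
  obtain a b where B: "zbasis3 \<O> 1 a b" by (rule basis_one)
  have Ospan: "\<O> = zspan3 1 a b" using B unfolding zbasis3_def by (simp only:)
  have ab: "a \<in> \<O>\<^sub>k" "b \<in> \<O>\<^sub>k"
    using zbasis3_mem[OF B] subset_maximal_order by auto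
  obtain N where N: "N > 0" "\<And>x. x \<in> \<O>\<^sub>k \<Longrightarrow> of_int N * x \<in> \<O>"
    using multiple_maximal_order_subset by blast
  define M where "M = (\<lambda>y. of_int N * y) ` \<O>\<^sub>k"
  have lattice_iff: "coord_lattice M a b k1 k2 \<longleftrightarrow>
      (\<exists>k0. \<exists>y\<in>\<O>\<^sub>k. of_int N * y = of_int k0 + of_int k1 * a + of_int k2 * b)" for k1 k2
    unfolding coord_lattice_def M_def image_iff by (simp add: eq_commute)
  have lat: "coord_lattice M a b N 0" "coord_lattice M a b 0 N"
    unfolding lattice_iff using ab by (auto intro!: exI[of _ 0])
  obtain d1 d2 x where H: "d1 > 0" "d2 > 0"
    "\<And>k1 k2. coord_lattice M a b k1 k2 \<longleftrightarrow> (\<exists>i j. k1 = i * d1 + j * x \<and> k2 = j * d2)"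
  proof (rule coord_lattice_hermite_basis[OF _ _ N(1) lat])
    show "u + v \<in> M" if "u \<in> M" "v \<in> M" for u v
      using subring1_scaled_closed(1)[OF subring1_maximal_order that[unfolded M_def]]
      unfolding M_def .
    show "- u \<in> M" if "u \<in> M" for u
      using subring1_scaled_closed(2)[OF subring1_maximal_order that[unfolded M_def] that[unfolded M_def]]
      unfolding M_def .
  qed (rule that)
  have "coord_lattice M a b d1 0" "coord_lattice M a b x d2"
    unfolding H(3) by (rule exI[of _ 1], rule exI[of _ 0], simp)
      (rule exI[of _ 0], rule exI[of _ 1], simp)
  then obtain c2 y2 c3 y3 where gen: "y2 \<in> \<O>\<^sub>k" "y3 \<in> \<O>\<^sub>k"
    "of_int N * y2 = of_int c2 + of_int d1 * a + of_int 0 * b"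
    "of_int N * y3 = of_int c3 + of_int x * a + of_int d2 * b"
    unfolding lattice_iff by blast
  have y2: "of_int N * y2 = of_int c2 + of_int d1 * a" using gen(3) by simp
  have "\<O>\<^sub>k \<subseteq> zspan3 1 y2 y3"
  proof
    fix y assume y: "y \<in> \<O>\<^sub>k"
    have "of_int N * y \<in> zspan3 1 a b" using N(2)[OF y] Ospan by (simp only:)
    then obtain k0 k1 k2 where k: "of_int N * y = of_int k0 * 1 + of_int k1 * a + of_int k2 * b"
      unfolding zspan3_iff by blast
    have "of_int k0 + of_int k1 * a + of_int k2 * b \<in> M"
      unfolding M_def using k by (intro image_eqI[OF _ y]) simp
    hence "coord_lattice M a b k1 k2" unfolding coord_lattice_def by blast
    then obtain i j where ij: "k1 = i * d1 + j * x" "k2 = j * d2" unfolding H(3) by blast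
    define z where "z = y - of_int i * y2 - of_int j * y3"
    have "of_int i * y2 \<in> \<O>\<^sub>k" "of_int j * y3 \<in> \<O>\<^sub>k"
      using gen(1,2) by (simp_all add: subring1_of_int_mult[OF subring1_maximal_order])
    hence zL: "z \<in> \<O>\<^sub>k" unfolding z_def
      using y by (simp add: subring1_diff[OF subring1_maximal_order])
    have "of_int N * z = of_int N * y - of_int i * (of_int N * y2) - of_int j * (of_int N * y3)"
      unfolding z_def by (simp add: algebra_simps)
    also have "\<dots> = of_int (k0 - i * c2 - j * c3)"
      unfolding k y2 gen(4) ij by (simp add: algebra_simps)
    finally have zN: "of_int N * z = of_int (k0 - i * c2 - j * c3)" .
    have "N \<noteq> 0" using N(1) by simp
    then obtain t where "z = of_int t" by (rule eq_of_int_if_of_int_mult_eq[OF zL _ zN])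
    hence "y = of_int t * 1 + of_int i * y2 + of_int j * y3" unfolding z_def by (simp add: algebra_simps)
    thus "y \<in> zspan3 1 y2 y3" unfolding zspan3_iff by blast
  qed
  moreover have "zspan3 1 y2 y3 \<subseteq> \<O>\<^sub>k"
    using subring1_maximal_order gen(1,2) by (intro subring1_zspan3 subring1_one)
  moreover have "zindep3 1 y2 y3"
    using B H(1,2) N(1) by (intro zindep3_triangular[OF _ _ _ _ y2 gen(4)]) (auto simp: zbasis3_def)
  ultimately have "zbasis3 \<O>\<^sub>k 1 y2 y3" unfolding zbasis3_def by blast
  thus ?thesis by (rule that)
qed

lemma coset_eq_iff_coord_lattice:
  "(\<lambda>n. (of_int c + of_int u * a + of_int v * b) + n) ` \<O> =
     (\<lambda>n. (of_int c' + of_int u' * a + of_int v' * b) + n) ` \<O> \<longleftrightarrow>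
   coord_lattice \<O> a b (u - u') (v - v')"
proof -
  have diff: "(of_int c + of_int u * a + of_int v * b) - (of_int c' + of_int u' * a + of_int v' * b)
      = of_int (c - c') + of_int (u - u') * a + of_int (v - v') * (b::'k)"
    by (simp add: algebra_simps)
  have "of_int e + of_int (u - u') * a + of_int (v - v') * b \<in> \<O> \<longleftrightarrow>
      of_int (c - c') + of_int (u - u') * a + of_int (v - v') * b \<in> \<O>" for e
  proof -
    have "of_int e + of_int (u - u') * a + of_int (v - v') * b
        = of_int (e - (c - c')) + (of_int (c - c') + of_int (u - u') * a + of_int (v - v') * b)"
      by (simp add: algebra_simps)
    thus ?thesis
      using subring1_add[OF subring subring1_of_int[OF subring]]
        subring1_diff[OF subring _ subring1_of_int[OF subring]] by (metis add_diff_cancel_left')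
  qed
  thus ?thesis
    unfolding subring1_coset_eq_iff[OF subring] diff coord_lattice_def by blast
qed

lemma index_eq_hermite_product:
  assumes L: "\<O>\<^sub>k = zspan3 1 a b"
    and H: "d1 > 0" "d2 > 0" "\<And>k1 k2. coord_lattice \<O> a b k1 k2 \<longleftrightarrow> (\<exists>i j. k1 = i * d1 + j * x \<and> k2 = j * d2)"
  shows "index = nat d1 * nat d2"
proof -
  define coset where "coset y = (\<lambda>n. y + n) ` \<O>" for y
  define phi where "phi = (\<lambda>(i::int, j::int). coset (of_int 0 + of_int i * a + of_int j * b))"
  define R where "R = {0..<d1} \<times> {0..<d2}"
  have "coset ` \<O>\<^sub>k \<subseteq> phi ` R"
  proof
    fix z assume "z \<in> coset ` \<O>\<^sub>k"
    then obtain y where y: "y \<in> zspan3 1 a b" "z = coset y" unfolding L by blast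
    then obtain k0 k1 k2 where z: "z = coset (of_int k0 * 1 + of_int k1 * a + of_int k2 * b)"
      unfolding zspan3_iff by blast
    define J j where "J = k2 div d2" and "j = k2 mod d2"
    define I i where "I = (k1 - J * x) div d1" and "i = (k1 - J * x) mod d1"
    have "k2 = J * d2 + j" "k1 - J * x = I * d1 + i" unfolding J_def j_def I_def i_def by simp_all
    hence "coord_lattice \<O> a b (k1 - i) (k2 - j)"
      unfolding H(3) by (intro exI[of _ I] exI[of _ J]) (simp add: algebra_simps)
    hence "z = phi (i, j)" unfolding z phi_def coset_def
      using coset_eq_iff_coord_lattice[where c = k0 and u = k1 and v = k2 and c' = 0 and u' = i and v' = j] by simp
    moreover have "(i, j) \<in> R" unfolding R_def i_def j_def using H(1,2) by simp
    ultimately show "z \<in> phi ` R" by blast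
  qed
  moreover have "phi ` R \<subseteq> coset ` \<O>\<^sub>k"
  proof
    fix z assume "z \<in> phi ` R"
    then obtain i j where "z = coset (of_int 0 * 1 + of_int i * a + of_int j * b)"
      unfolding phi_def by auto
    moreover have "of_int 0 * 1 + of_int i * a + of_int j * b \<in> \<O>\<^sub>k"
      unfolding L zspan3_iff by blast
    ultimately show "z \<in> coset ` \<O>\<^sub>k" by blast
  qed
  moreover have "inj_on phi R"
  proof (rule inj_onI)
    fix p p' assume "p \<in> R" "p' \<in> R" "phi p = phi p'"
    then obtain i j i' j' where ij: "p = (i, j)" "p' = (i', j')" "0 \<le> i" "i < d1" "0 \<le> j" "j < d2"
      "0 \<le> i'" "i' < d1" "0 \<le> j'" "j' < d2" and eq: "phi (i, j) = phi (i', j')"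
      unfolding R_def by auto
    have "coord_lattice \<O> a b (i - i') (j - j')"
      using eq coset_eq_iff_coord_lattice[where c = 0 and u = i and v = j and c' = 0 and u' = i' and v' = j'] unfolding phi_def coset_def by simp
    then obtain I J where IJ: "i - i' = I * d1 + J * x" "j - j' = J * d2" unfolding H(3) by blast
    have "J = 0" using IJ(2) ij H(2) by (intro abs_mult_less_imp_eq_0[of d2]) auto
    hence "I = 0" using IJ(1) ij H(1) by (intro abs_mult_less_imp_eq_0[of d1]) auto
    thus "p = p'" using IJ \<open>J = 0\<close> ij by simp
  qed
  ultimately have "index = card R"
    unfolding group_index_def coset_def[symmetric] using card_image by (metis subset_antisym)
  thus ?thesis unfolding R_def by (simp add: card_cartesian_product)
qed

lemma basis_from_cyclic_lattice:
  assumes LB: "zbasis3 \<O>\<^sub>k 1 a b" and f: "f \<noteq> 0" and rel: "X + nu * d2 = 1"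
    and C: "\<And>k1 k2. coord_lattice \<O> a b k1 k2 \<longleftrightarrow>
      (\<exists>al be. k1 = al * f * nu + be * X \<and> k2 = - al * f + be * d2)"
  obtains \<omega> \<theta> where "zbasis3 \<O>\<^sub>k 1 \<omega> \<theta>" "zbasis3 \<O> 1 (of_int f * \<omega>) \<theta>"
proof -
  have "coord_lattice \<O> a b X d2" unfolding C by (rule exI[of _ 0], rule exI[of _ 1]) simp
  then obtain ct where ct: "of_int ct + of_int X * a + of_int d2 * b \<in> \<O>"
    unfolding coord_lattice_def by blast
  have "coord_lattice \<O> a b (f * nu) (- f)" unfolding C by (rule exI[of _ 1], rule exI[of _ 0]) simp
  then obtain cw where cw: "of_int cw + of_int (f * nu) * a + of_int (- f) * b \<in> \<O>"
    unfolding coord_lattice_def by blast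
  define \<omega> where "\<omega> = of_int 0 * 1 + of_int nu * a + of_int (- 1) * b"
  define \<theta> where "\<theta> = of_int ct * 1 + of_int X * a + of_int d2 * b"
  have "1 = of_int 1 * 1 + of_int 0 * a + of_int 0 * (b::'k)" by simp
  moreover have "\<bar>det3 1 0 0 0 nu (- 1) ct X d2\<bar> = 1"
    using rel by (simp add: det3_def algebra_simps)
  ultimately have LB': "zbasis3 \<O>\<^sub>k 1 \<omega> \<theta>"
    by (rule zbasis3_unimodular_change[OF LB _ \<omega>_def \<theta>_def])
  have "(of_int cw + of_int (f * nu) * a + of_int (- f) * b) - of_int cw \<in> \<O>"
    by (rule subring1_diff[OF subring cw subring1_of_int[OF subring]])
  moreover have "(of_int cw + of_int (f * nu) * a + of_int (- f) * b) - of_int cw = of_int f * \<omega>"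
    unfolding \<omega>_def by (simp add: algebra_simps)
  ultimately have f\<omega>: "of_int f * \<omega> \<in> \<O>" by (simp only:)
  have \<theta>: "\<theta> \<in> \<O>" using ct unfolding \<theta>_def by simp
  have "\<O> \<subseteq> zspan3 1 (of_int f * \<omega>) \<theta>"
  proof
    fix y assume y: "y \<in> \<O>"
    hence "y \<in> zspan3 1 a b" using subset_maximal_order LB unfolding zbasis3_def by blast
    then obtain k0 k1 k2 where k: "y = of_int k0 * 1 + of_int k1 * a + of_int k2 * b"
      unfolding zspan3_iff by blast
    hence "coord_lattice \<O> a b k1 k2" using y unfolding coord_lattice_def by auto
    then obtain al be where ab: "k1 = al * f * nu + be * X" "k2 = - al * f + be * d2"
      unfolding C by blast
    have "y = of_int (k0 - be * ct) * 1 + of_int al * (of_int f * \<omega>) + of_int be * \<theta>"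
      unfolding k ab \<omega>_def \<theta>_def by (simp add: algebra_simps)
    thus "y \<in> zspan3 1 (of_int f * \<omega>) \<theta>" unfolding zspan3_iff by blast
  qed
  moreover have "zspan3 1 (of_int f * \<omega>) \<theta> \<subseteq> \<O>"
    using subring f\<omega> \<theta> by (intro subring1_zspan3 subring1_one)
  moreover have "zindep3 1 (of_int f * \<omega>) \<theta>"
    using LB' f unfolding zbasis3_def by (simp add: zindep3_scale)
  ultimately have "zbasis3 \<O> 1 (of_int f * \<omega>) \<theta>" unfolding zbasis3_def by blast
  thus ?thesis using LB' that by blast
qed

text \<open>The additive quotient of the maximal order by the order is cyclic, because its order is
  squarefree.\<close>

lemma basis_index_multiple:
  assumes sqf: "squarefree index"
  obtains \<omega> \<theta> where "zbasis3 \<O>\<^sub>k 1 \<omega> \<theta>" "zbasis3 \<O> 1 (of_nat index * \<omega>) \<theta>"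
proof -
  obtain a b where LB: "zbasis3 \<O>\<^sub>k 1 a b" by (rule maximal_order_basis_one)
  obtain N where N: "N > 0" "\<And>x. x \<in> \<O>\<^sub>k \<Longrightarrow> of_int N * x \<in> \<O>"
    using multiple_maximal_order_subset by blast
  have "of_int N * a \<in> \<O>" "of_int N * b \<in> \<O>" using N(2) zbasis3_mem[OF LB] by auto
  hence lat: "coord_lattice \<O> a b N 0" "coord_lattice \<O> a b 0 N"
    unfolding coord_lattice_def by (auto intro!: exI[of _ 0])
  obtain d1 d2 x where H: "d1 > 0" "d2 > 0"
    "\<And>k1 k2. coord_lattice \<O> a b k1 k2 \<longleftrightarrow> (\<exists>i j. k1 = i * d1 + j * x \<and> k2 = j * d2)"
    by (rule coord_lattice_hermite_basis[OF _ _ N(1) lat])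
      (use subring1_add[OF subring] subring1_uminus[OF subring] in blast)+
  have index: "index = nat d1 * nat d2"
    using LB H by (intro index_eq_hermite_product) (auto simp: zbasis3_def)
  hence "coprime d1 d2" using sqf H(1,2) by (simp add: coprime_if_squarefree_mult)
  then obtain X nu where "X + nu * d2 = 1" and C: "\<And>k1 k2.
      (\<exists>i j. k1 = i * d1 + j * x \<and> k2 = j * d2) \<longleftrightarrow>
      (\<exists>al be. k1 = al * (d1 * d2) * nu + be * X \<and> k2 = - al * (d1 * d2) + be * d2)"
    by (rule coprime_hermite_lattice_cyclic[where x = x]) blast
  moreover have "d1 * d2 \<noteq> 0" using H(1,2) by simp
  moreover have "(of_nat index :: 'k) = of_int (d1 * d2)" using index H(1,2) by simp
  ultimately show ?thesis
    using basis_from_cyclic_lattice[OF LB, of "d1 * d2" X nu d2] that H(3) C by metis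
qed

end

section \<open>Normalized bases\<close>

lemma normalized_basis_structure_constants:
  fixes w th :: "'k::comm_ring_1"
  assumes ind: "zindep3 1 w th"
    and wt: "w * th = of_int n"
    and ww: "w * w = of_int r * 1 + of_int s * w + of_int t * th"
    and tt: "th * th = of_int r' * 1 + of_int s' * w + of_int t' * th"
  shows "n = t * s' \<and> r = - t * t' \<and> r' = - s * s'"
proof -
  have "of_int (s*n + t*r') * 1 + of_int (t*s') * w + of_int (r + t*t') * th = (w * w) * th"
  proof -
    have "(w * w) * th = of_int r * th + of_int s * (w * th) + of_int t * (th * th)"
      unfolding ww by (simp add: algebra_simps)
    also have "\<dots> = of_int (s*n + t*r') * 1 + of_int (t*s') * w + of_int (r + t*t') * th"
      unfolding wt tt by (simp add: algebra_simps)
    finally show ?thesis by simp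
  qed
  also have "(w * w) * th = of_int 0 * 1 + of_int n * w + of_int 0 * th"
    using wt by (simp add: algebra_simps mult.assoc[symmetric])
  finally have e1: "s*n + t*r' = 0 \<and> t*s' = n \<and> r + t*t' = 0" using zindep3_coeffs_eq[OF ind] by blast
  have "of_int (s'*r + t'*n) * 1 + of_int (r' + s'*s) * w + of_int (s'*t) * th = w * (th * th)"
  proof -
    have "w * (th * th) = of_int r' * w + of_int s' * (w * w) + of_int t' * (w * th)"
      unfolding tt by (simp add: algebra_simps)
    also have "\<dots> = of_int (s'*r + t'*n) * 1 + of_int (r' + s'*s) * w + of_int (s'*t) * th"
      unfolding wt ww by (simp add: algebra_simps)
    finally show ?thesis by simp
  qed
  also have "w * (th * th) = of_int 0 * 1 + of_int 0 * w + of_int n * th"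
    using wt by (simp add: mult.assoc[symmetric])
  finally have e2: "s'*r + t'*n = 0 \<and> r' + s'*s = 0 \<and> s'*t = n" using zindep3_coeffs_eq[OF ind] by blast
  show ?thesis using e1 e2 by (simp add: algebra_simps)
qed

lemma normalized_basis_structure_constants_nonzero:
  fixes w th :: "'k::comm_ring_1"
  assumes reduced: "\<And>z::'k. z * z = 0 \<Longrightarrow> z = 0" and ind: "zindep3 1 w th"
    and wt: "w * th = of_int n"
    and ww: "w * w = of_int r * 1 + of_int s * w + of_int t * th"
    and tt: "th * th = of_int r' * 1 + of_int s' * w + of_int t' * th"
  shows "\<not> (t = 0 \<and> s = 0 \<and> t' = 0 \<and> s' = 0)"
proof
  assume "t = 0 \<and> s = 0 \<and> t' = 0 \<and> s' = 0"
  hence "w * w = 0" using ww normalized_basis_structure_constants[OF ind wt ww tt] by simp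
  hence "w = 0" by (rule reduced)
  hence "of_int 0 * 1 + of_int 1 * w + of_int 0 * th = (0::'k)" by simp
  hence "(1::int) = 0" using ind unfolding zindep3_def by blast
  thus False by simp
qed

lemma zbasis3_pair_change:
  fixes w th :: "'k::comm_ring_1"
  assumes LB: "zbasis3 L 1 w th" and OB: "zbasis3 M 1 (of_int f * w) th"
    and det: "A * D - B * C = 1" and C: "C = f * C'"
  shows "zbasis3 L 1 (of_int A * w + of_int B * th + of_int e1) (of_int C * w + of_int D * th + of_int e2)
    \<and> zbasis3 M 1 (of_int f * (of_int A * w + of_int B * th + of_int e1))
        (of_int C * w + of_int D * th + of_int e2)"
proof
  show "zbasis3 L 1 (of_int A * w + of_int B * th + of_int e1) (of_int C * w + of_int D * th + of_int e2)"
    by (rule zbasis3_unimodular_change[OF LB, where ma=1 and mb=0 and mc=0 and md=e1 and me=A and mf=B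
          and mg=e2 and mh=C and mi=D]) (use det in \<open>auto simp: det3_def algebra_simps\<close>)
  show "zbasis3 M 1 (of_int f * (of_int A * w + of_int B * th + of_int e1))
      (of_int C * w + of_int D * th + of_int e2)"
    by (rule zbasis3_unimodular_change[OF OB, where ma=1 and mb=0 and mc=0 and md="f*e1" and me=A
          and mf="f*B" and mg=e2 and mh=C' and mi=D]) (use det C in \<open>auto simp: det3_def algebra_simps\<close>)
qed

text \<open>Translating w and th by the integers -t and -s, where w th = r + s w + t th, makes the
  product an integer.\<close>

lemma normalize_by_translation:
  fixes w th :: "'k::comm_ring_1"
  assumes LB: "zbasis3 L 1 w th" and OB: "zbasis3 M 1 (of_int f * w) th" and prod: "w * th \<in> L"
  obtains e1 e2 n where "zbasis3 L 1 (w + of_int e1) (th + of_int e2)"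
    "zbasis3 M 1 (of_int f * (w + of_int e1)) (th + of_int e2)"
    "(w + of_int e1) * (th + of_int e2) = of_int n"
proof -
  have "w * th \<in> zspan3 1 w th" using prod LB unfolding zbasis3_def by simp
  then obtain r s t where p: "w * th = of_int r * 1 + of_int s * w + of_int t * th"
    unfolding zspan3_iff by blast
  have "(w + of_int (- t)) * (th + of_int (- s)) = of_int (r + s * t)"
    unfolding distrib_left distrib_right p by (simp add: algebra_simps)
  moreover have "zbasis3 L 1 (w + of_int (- t)) (th + of_int (- s))
      \<and> zbasis3 M 1 (of_int f * (w + of_int (- t))) (th + of_int (- s))"
    using zbasis3_pair_change[OF LB OB, of 1 1 0 0 0 "- t" "- s"] by simp
  ultimately show ?thesis using that by blast
qed

text \<open>The index form of a normalized basis with multiplication table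
  w^2 = r + s w + t th and th^2 = r' + s' w + t' th.\<close>

definition cubic_form :: "int \<Rightarrow> int \<Rightarrow> int \<Rightarrow> int \<Rightarrow> int \<Rightarrow> int \<Rightarrow> int" where
  "cubic_form t s t' s' x y = t * x ^ 3 - s * x ^ 2 * y + t' * x * y ^ 2 - s' * y ^ 3"

text \<open>A cubic polynomial in m vanishing at m = 0, 1, 2, 3 is zero.\<close>

lemma cubic_form_nonzero_at_multiple:
  assumes f: "f \<noteq> 0" and nz: "\<not> (t = 0 \<and> s = 0 \<and> t' = 0 \<and> s' = 0)"
  obtains m where "cubic_form t s t' s' (f * m) 1 \<noteq> 0"
proof (rule ccontr)
  assume "\<not> thesis"
  hence z: "cubic_form t s t' s' (f * m) 1 = 0" for m using that by blast
  define a b c where "a = t * f ^ 3" and "b = - s * f ^ 2" and "c = t' * f"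
  have g: "cubic_form t s t' s' (f * m) 1 = a * m ^ 3 + b * m ^ 2 + c * m - s'" for m
    unfolding cubic_form_def a_def b_def c_def by (simp add: algebra_simps power_mult_distrib)
  have e0: "s' = 0" using z[of 0] g[of 0] by simp
  have "a + b + c = 0" "8 * a + 4 * b + 2 * c = 0" "27 * a + 9 * b + 3 * c = 0"
    using z[of 1] g[of 1] z[of 2] g[of 2] z[of 3] g[of 3] e0 by simp_all
  hence "a = 0" "b = 0" "c = 0" by linarith+
  hence "t = 0" "s = 0" "t' = 0" using f unfolding a_def b_def c_def by auto
  with e0 nz show False by simp
qed

text \<open>The values at B = 0, 1, 2, 3 have third difference 6 F(x, 1).\<close>

lemma cubic_form_nonzero_on_line:
  assumes "cubic_form t s t' s' x 1 \<noteq> 0"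
  obtains B where "cubic_form t s t' s' (1 + B * x) B \<noteq> 0"
proof (rule ccontr)
  assume "\<not> thesis"
  hence z: "cubic_form t s t' s' (1 + B * x) B = 0" for B using that by blast
  have "cubic_form t s t' s' (1 + 3 * x) 3 - 3 * cubic_form t s t' s' (1 + 2 * x) 2
      + 3 * cubic_form t s t' s' (1 + 1 * x) 1 - cubic_form t s t' s' (1 + 0 * x) 0
      = 6 * cubic_form t s t' s' x 1"
    unfolding cubic_form_def by (simp add: algebra_simps power2_eq_square power3_eq_cube)
  thus False using z[of 0] z[of 1] z[of 2] z[of 3] assms by simp
qed

lemma square_coeffs_change:
  fixes \<omega>1 \<theta>1 :: "'k::comm_ring_1"
  assumes ind1: "zindep3 1 \<omega>1 \<theta>1" and n1: "\<omega>1 * \<theta>1 = of_int n1"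
    and ww: "\<omega>1 * \<omega>1 = of_int r * 1 + of_int s * \<omega>1 + of_int t * \<theta>1"
    and tt: "\<theta>1 * \<theta>1 = of_int r' * 1 + of_int s' * \<omega>1 + of_int t' * \<theta>1"
    and \<omega>: "\<omega> = of_int A0 * \<omega>1 + of_int B0 * \<theta>1 + of_int E1"
    and \<theta>: "\<theta> = of_int C0 * \<omega>1 + of_int D0 * \<theta>1 + of_int E2"
    and z: "z = of_int A * \<omega>1 + of_int B * \<theta>1 + of_int E"
    and zz: "z * z = of_int R * 1 + of_int S * \<omega> + of_int T * \<theta>"
  shows "S * A0 + T * C0 = A * A * s + B * B * s' + 2 * E * A
    \<and> S * B0 + T * D0 = A * A * t + B * B * t' + 2 * E * B"
proof -
  have "of_int (R + S * E1 + T * E2) * 1 + of_int (S * A0 + T * C0) * \<omega>1 + of_int (S * B0 + T * D0) * \<theta>1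
      = z * z"
    unfolding zz \<omega> \<theta> by (simp add: algebra_simps)
  also have "z * z = of_int (A * A) * (\<omega>1 * \<omega>1) + of_int (2 * A * B) * (\<omega>1 * \<theta>1)
      + of_int (B * B) * (\<theta>1 * \<theta>1) + of_int (2 * E * A) * \<omega>1 + of_int (2 * E * B) * \<theta>1 + of_int (E * E)"
    unfolding z by (simp add: algebra_simps)
  also have "\<dots> = of_int (A * A * r + 2 * A * B * n1 + B * B * r' + E * E) * 1
      + of_int (A * A * s + B * B * s' + 2 * E * A) * \<omega>1 + of_int (A * A * t + B * B * t' + 2 * E * B) * \<theta>1"
    unfolding ww tt n1 by (simp add: algebra_simps)
  finally show ?thesis using zindep3_coeffs_eq[OF ind1] by blast
qed

lemma normalized_basis_change_product:
  fixes \<omega>1 \<theta>1 :: "'k::comm_ring_1"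
  assumes LB1: "zbasis3 maximal_order 1 \<omega>1 \<theta>1" and n1: "\<omega>1 * \<theta>1 = of_int n1"
    and ww: "\<omega>1 * \<omega>1 = of_int r * 1 + of_int s * \<omega>1 + of_int t * \<theta>1"
    and tt: "\<theta>1 * \<theta>1 = of_int r' * 1 + of_int s' * \<omega>1 + of_int t' * \<theta>1"
    and LB: "zbasis3 maximal_order 1 \<omega> \<theta>" and n: "\<omega> * \<theta> = of_int n"
    and \<omega>: "\<omega> = of_int A * \<omega>1 + of_int B * \<theta>1 + of_int e"
    and \<theta>: "\<theta> = of_int C * \<omega>1 + of_int 1 * \<theta>1 + of_int e'"
    and det: "A - B * C = 1"
  shows "n = - cubic_form t s t' s' A B * cubic_form t s t' s' C 1"
proof -
  have ind1: "zindep3 1 \<omega>1 \<theta>1" and ind: "zindep3 1 \<omega> \<theta>" using LB1 LB unfolding zbasis3_def by auto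
  have mem: "\<omega> \<in> maximal_order" "\<theta> \<in> maximal_order" using zbasis3_mem[OF LB] by auto
  obtain R S T where WW: "\<omega> * \<omega> = of_int R * 1 + of_int S * \<omega> + of_int T * \<theta>"
    using zbasis3_coords[OF LB subring1_mult[OF subring1_maximal_order mem(1) mem(1)]] by blast
  obtain R' S' T' where TT: "\<theta> * \<theta> = of_int R' * 1 + of_int S' * \<omega> + of_int T' * \<theta>"
    using zbasis3_coords[OF LB subring1_mult[OF subring1_maximal_order mem(2) mem(2)]] by blast
  have cw: "S * A + T * C = A * A * s + B * B * s' + 2 * e * A \<and>
      S * B + T * 1 = A * A * t + B * B * t' + 2 * e * B"
    by (rule square_coeffs_change[OF ind1 n1 ww tt \<omega> \<theta> \<omega> WW])
  have ct: "S' * A + T' * C = C * C * s + 1 * 1 * s' + 2 * e' * C \<and>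
      S' * B + T' * 1 = C * C * t + 1 * 1 * t' + 2 * e' * 1"
    by (rule square_coeffs_change[OF ind1 n1 ww tt \<omega> \<theta> \<theta> TT])
  have "T = T * (A - B * C)" using det by simp
  also have "\<dots> = A * (S * B + T * 1) - B * (S * A + T * C)" by (simp add: algebra_simps)
  also have "\<dots> = cubic_form t s t' s' A B"
    unfolding cw[THEN conjunct1] cw[THEN conjunct2] cubic_form_def
    by (simp add: algebra_simps power2_eq_square power3_eq_cube)
  finally have T: "T = cubic_form t s t' s' A B" .
  have "S' = S' * (A - B * C)" using det by simp
  also have "\<dots> = (S' * A + T' * C) - C * (S' * B + T' * 1)" by (simp add: algebra_simps)
  also have "\<dots> = - cubic_form t s t' s' C 1"
    unfolding ct[THEN conjunct1] ct[THEN conjunct2] cubic_form_def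
    by (simp add: algebra_simps power2_eq_square power3_eq_cube)
  finally have S': "S' = - cubic_form t s t' s' C 1" .
  show ?thesis using normalized_basis_structure_constants[OF ind n WW TT] T S' by simp
qed

lemma normalized_basis_nonzero_product:
  fixes \<omega>0 \<theta>0 :: "'k::comm_ring_1"
  assumes reduced: "\<And>w::'k. w * w = 0 \<Longrightarrow> w = 0" and f: "f \<noteq> 0"
    and LB0: "zbasis3 maximal_order 1 \<omega>0 \<theta>0" and OB0: "zbasis3 M 1 (of_int f * \<omega>0) \<theta>0"
  obtains \<omega> \<theta> n where "zbasis3 maximal_order 1 \<omega> \<theta>" "zbasis3 M 1 (of_int f * \<omega>) \<theta>"
    "\<omega> * \<theta> = of_int n" "n \<noteq> 0"
proof -
  have prod: "w * th \<in> maximal_order" if "zbasis3 maximal_order 1 w th" for w th :: 'k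
    using zbasis3_mem[OF that] subring1_mult[OF subring1_maximal_order] by blast
  obtain e1 e2 n1 where LB1: "zbasis3 maximal_order 1 (\<omega>0 + of_int e1) (\<theta>0 + of_int e2)"
    and OB1: "zbasis3 M 1 (of_int f * (\<omega>0 + of_int e1)) (\<theta>0 + of_int e2)"
    and n1: "(\<omega>0 + of_int e1) * (\<theta>0 + of_int e2) = of_int n1"
    by (rule normalize_by_translation[OF LB0 OB0 prod[OF LB0]])
  define \<omega>1 \<theta>1 where "\<omega>1 = \<omega>0 + of_int e1" and "\<theta>1 = \<theta>0 + of_int e2"
  note LB1 = LB1[folded \<omega>1_def \<theta>1_def] and OB1 = OB1[folded \<omega>1_def \<theta>1_def]
    and n1 = n1[folded \<omega>1_def \<theta>1_def]
  have ind1: "zindep3 1 \<omega>1 \<theta>1" using LB1 unfolding zbasis3_def by blast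
  have mem: "\<omega>1 \<in> maximal_order" "\<theta>1 \<in> maximal_order" using zbasis3_mem[OF LB1] by auto
  obtain r s t where ww: "\<omega>1 * \<omega>1 = of_int r * 1 + of_int s * \<omega>1 + of_int t * \<theta>1"
    using zbasis3_coords[OF LB1 subring1_mult[OF subring1_maximal_order mem(1) mem(1)]] by blast
  obtain r' s' t' where tt: "\<theta>1 * \<theta>1 = of_int r' * 1 + of_int s' * \<omega>1 + of_int t' * \<theta>1"
    using zbasis3_coords[OF LB1 subring1_mult[OF subring1_maximal_order mem(2) mem(2)]] by blast
  have "\<not> (t = 0 \<and> s = 0 \<and> t' = 0 \<and> s' = 0)"
    by (rule normalized_basis_structure_constants_nonzero[OF reduced ind1 n1 ww tt])
  then obtain m where m: "cubic_form t s t' s' (f * m) 1 \<noteq> 0"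
    by (rule cubic_form_nonzero_at_multiple[OF f])
  then obtain B where B: "cubic_form t s t' s' (1 + B * (f * m)) B \<noteq> 0"
    by (rule cubic_form_nonzero_on_line)
  define A C where "A = 1 + B * (f * m)" and "C = f * m"
  define \<omega>2 \<theta>2 where "\<omega>2 = of_int A * \<omega>1 + of_int B * \<theta>1 + of_int 0"
    and "\<theta>2 = of_int C * \<omega>1 + of_int 1 * \<theta>1 + of_int 0"
  have "zbasis3 maximal_order 1 \<omega>2 \<theta>2 \<and> zbasis3 M 1 (of_int f * \<omega>2) \<theta>2"
    unfolding \<omega>2_def \<theta>2_def
    by (rule zbasis3_pair_change[OF LB1 OB1, where C' = m]) (simp_all add: A_def C_def)
  hence LB2: "zbasis3 maximal_order 1 \<omega>2 \<theta>2" and OB2: "zbasis3 M 1 (of_int f * \<omega>2) \<theta>2" by auto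
  obtain E1 E2 n where LB: "zbasis3 maximal_order 1 (\<omega>2 + of_int E1) (\<theta>2 + of_int E2)"
    and OB: "zbasis3 M 1 (of_int f * (\<omega>2 + of_int E1)) (\<theta>2 + of_int E2)"
    and n: "(\<omega>2 + of_int E1) * (\<theta>2 + of_int E2) = of_int n"
    by (rule normalize_by_translation[OF LB2 OB2 prod[OF LB2]])
  have "n = - cubic_form t s t' s' A B * cubic_form t s t' s' C 1"
    by (rule normalized_basis_change_product[OF LB1 n1 ww tt LB n, where e = E1 and e' = E2])
      (simp_all add: \<omega>2_def \<theta>2_def A_def C_def)
  hence "n \<noteq> 0" using m B unfolding A_def C_def by simp
  with LB OB n show ?thesis by (rule that)
qed

section \<open>The conductor\<close>

lemma mem_conductor_span_iff:
  fixes \<omega> \<theta> :: "'k::comm_ring_1"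
  shows "x \<in> zspan3 (of_int f) (of_int f * \<omega>) \<theta> \<longleftrightarrow>
    (\<exists>u v w. x = of_int (f * u) * 1 + of_int (f * v) * \<omega> + of_int w * \<theta>)"
proof -
  have "of_int u * of_int f + of_int v * (of_int f * \<omega>) + of_int w * \<theta>
      = of_int (f * u) * 1 + of_int (f * v) * \<omega> + of_int w * \<theta>" for u v w
    by (simp add: algebra_simps)
  thus ?thesis unfolding zspan3_iff by (simp only:)
qed

lemma square_coeff_dvd:
  fixes \<omega> \<theta> :: "'k::comm_ring_1"
  assumes ind: "zindep3 1 \<omega> \<theta>" and OB: "zbasis3 M 1 (of_int f * \<omega>) \<theta>" and M: "subring1 M"
    and tt: "\<theta> * \<theta> = of_int r' * 1 + of_int s' * \<omega> + of_int t' * \<theta>"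
  shows "f dvd s'"
proof -
  have "\<theta> \<in> M" using zbasis3_mem[OF OB] by blast
  hence "\<theta> * \<theta> \<in> zspan3 1 (of_int f * \<omega>) \<theta>" using subring1_mult[OF M] OB unfolding zbasis3_def by blast
  then obtain a b c where "\<theta> * \<theta> = of_int a * 1 + of_int b * (of_int f * \<omega>) + of_int c * \<theta>"
    unfolding zspan3_iff by blast
  hence "of_int r' * 1 + of_int s' * \<omega> + of_int t' * \<theta> = of_int a * 1 + of_int (b * f) * \<omega> + of_int c * \<theta>"
    using tt by (simp add: algebra_simps)
  hence "s' = b * f" using zindep3_coeffs_eq[OF ind] by blast
  thus ?thesis by simp
qed

text \<open>The conductor is an ideal because f divides the coefficients n = t s', r' = - s s' and s'
  of the multiplication table that could leave it.\<close>

lemma conductor_span_ideal: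
  fixes \<omega> \<theta> :: "'k::comm_ring_1"
  assumes LB: "zbasis3 maximal_order 1 \<omega> \<theta>" and OB: "zbasis3 M 1 (of_int f * \<omega>) \<theta>"
    and M: "subring1 M" and nn: "\<omega> * \<theta> = of_int n"
  shows "ideal_of maximal_order (zspan3 (of_int f) (of_int f * \<omega>) \<theta>)"
proof -
  let ?C = "zspan3 (of_int f) (of_int f * \<omega>) \<theta>"
  have ind: "zindep3 1 \<omega> \<theta>" using LB unfolding zbasis3_def by blast
  have mem: "\<omega> \<in> maximal_order" "\<theta> \<in> maximal_order" using zbasis3_mem[OF LB] by auto
  obtain r s t where ww: "\<omega> * \<omega> = of_int r * 1 + of_int s * \<omega> + of_int t * \<theta>"
    using zbasis3_coords[OF LB subring1_mult[OF subring1_maximal_order mem(1) mem(1)]] by blast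
  obtain r' s' t' where tt: "\<theta> * \<theta> = of_int r' * 1 + of_int s' * \<omega> + of_int t' * \<theta>"
    using zbasis3_coords[OF LB subring1_mult[OF subring1_maximal_order mem(2) mem(2)]] by blast
  have ar: "n = t * s' \<and> r = - t * t' \<and> r' = - s * s'"
    using normalized_basis_structure_constants[OF ind nn ww tt] .
  obtain b where b: "s' = b * f" using square_coeff_dvd[OF ind OB M tt] by (metis dvd_def mult.commute)
  have nb: "n = f * (t * b)" and rb: "r' = f * (- s * b)" using ar b by simp_all
  have "?C \<subseteq> maximal_order"
    by (rule subring1_zspan3[OF subring1_maximal_order subring1_of_int[OF subring1_maximal_order]
          subring1_of_int_mult[OF subring1_maximal_order mem(1)] mem(2)])
  moreover have "0 \<in> ?C"
    unfolding zspan3_iff by (rule exI[of _ 0], rule exI[of _ 0], rule exI[of _ 0]) simp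
  moreover have "x + y \<in> ?C \<and> x - y \<in> ?C" if xy: "x \<in> ?C" "y \<in> ?C" for x y
  proof -
    obtain u v w where x: "x = of_int (f * u) * 1 + of_int (f * v) * \<omega> + of_int w * \<theta>"
      using xy(1) unfolding mem_conductor_span_iff by blast
    obtain u' v' w' where y: "y = of_int (f * u') * 1 + of_int (f * v') * \<omega> + of_int w' * \<theta>"
      using xy(2) unfolding mem_conductor_span_iff by blast
    have "x + y = of_int (f * (u + u')) * 1 + of_int (f * (v + v')) * \<omega> + of_int (w + w') * \<theta>"
      "x - y = of_int (f * (u - u')) * 1 + of_int (f * (v - v')) * \<omega> + of_int (w - w') * \<theta>"
      unfolding x y by (simp_all add: algebra_simps)
    thus ?thesis unfolding mem_conductor_span_iff by blast
  qed
  moreover have "y * x \<in> ?C" if xy: "x \<in> ?C" "y \<in> maximal_order" for x y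
  proof -
    obtain u v w where x: "x = of_int (f * u) * 1 + of_int (f * v) * \<omega> + of_int w * \<theta>"
      using xy(1) unfolding mem_conductor_span_iff by blast
    obtain al be ga where y: "y = of_int al * 1 + of_int be * \<omega> + of_int ga * \<theta>"
      using zbasis3_coords[OF LB xy(2)] by blast
    have "y * x = of_int (al*f*u) + of_int (al*f*v) * \<omega> + of_int (al*w) * \<theta> + of_int (be*f*u) * \<omega>
        + of_int (be*f*v) * (\<omega> * \<omega>) + of_int (be*w) * (\<omega> * \<theta>) + of_int (ga*f*u) * \<theta>
        + of_int (ga*f*v) * (\<omega> * \<theta>) + of_int (ga*w) * (\<theta> * \<theta>)"
      unfolding x y by (simp add: algebra_simps)
    also have "\<dots> = of_int (f*(al*u + be*v*r + be*w*(t*b) + ga*v*n + ga*w*(- s * b))) * 1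
        + of_int (f*(al*v + be*u + be*v*s + ga*w*b)) * \<omega> + of_int (al*w + be*f*v*t + ga*f*u + ga*w*t') * \<theta>"
      unfolding ww tt nn unfolding nb rb b by (simp add: algebra_simps)
    finally show ?thesis unfolding mem_conductor_span_iff by blast
  qed
  ultimately show ?thesis unfolding ideal_of_def by blast
qed

lemma ideal_subset_conductor_span:
  fixes \<omega> \<theta> :: "'k::comm_ring_1"
  assumes LB: "zbasis3 maximal_order 1 \<omega> \<theta>" and OB: "zbasis3 M 1 (of_int f * \<omega>) \<theta>"
    and nn: "\<omega> * \<theta> = of_int n" and I: "ideal_of maximal_order I" "I \<subseteq> M"
  shows "I \<subseteq> zspan3 (of_int f) (of_int f * \<omega>) \<theta>"
proof
  fix x assume xI: "x \<in> I"
  have ind: "zindep3 1 \<omega> \<theta>" using LB unfolding zbasis3_def by blast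
  have mem: "\<omega> \<in> maximal_order" using zbasis3_mem[OF LB] by auto
  obtain r s t where ww: "\<omega> * \<omega> = of_int r * 1 + of_int s * \<omega> + of_int t * \<theta>"
    using zbasis3_coords[OF LB subring1_mult[OF subring1_maximal_order mem mem]] by blast
  obtain a b c where x: "x = of_int a * 1 + of_int b * (of_int f * \<omega>) + of_int c * \<theta>"
    using zbasis3_coords[OF OB] xI I(2) by blast
  have "\<omega> * x \<in> M" using I xI mem unfolding ideal_of_def by blast
  then obtain a' b' c' where "\<omega> * x = of_int a' * 1 + of_int b' * (of_int f * \<omega>) + of_int c' * \<theta>"
    using zbasis3_coords[OF OB] by blast
  moreover have "\<omega> * x = of_int (b*f*r + c*n) * 1 + of_int (a + b*f*s) * \<omega> + of_int (b*f*t) * \<theta>"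
  proof -
    have "\<omega> * x = of_int a * \<omega> + of_int (b*f) * (\<omega> * \<omega>) + of_int c * (\<omega> * \<theta>)"
      unfolding x by (simp add: algebra_simps)
    also have "\<dots> = of_int (b*f*r + c*n) * 1 + of_int (a + b*f*s) * \<omega> + of_int (b*f*t) * \<theta>"
      unfolding ww nn by (simp add: algebra_simps)
    finally show ?thesis .
  qed
  ultimately have "of_int a' * 1 + of_int (b' * f) * \<omega> + of_int c' * \<theta>
      = of_int (b*f*r + c*n) * 1 + of_int (a + b*f*s) * \<omega> + of_int (b*f*t) * \<theta>"
    by (simp add: algebra_simps)
  hence "b' * f = a + b*f*s" using zindep3_coeffs_eq[OF ind] by blast
  hence "x = of_int (f*(b' - b*s)) * 1 + of_int (f*b) * \<omega> + of_int c * \<theta>"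
    unfolding x by (simp add: algebra_simps)
  thus "x \<in> zspan3 (of_int f) (of_int f * \<omega>) \<theta>" unfolding mem_conductor_span_iff by blast
qed

lemma is_conductor_normalized_basis:
  fixes \<omega> \<theta> :: "'k::comm_ring_1"
  assumes LB: "zbasis3 maximal_order 1 \<omega> \<theta>" and OB: "zbasis3 M 1 (of_int f * \<omega>) \<theta>"
    and M: "subring1 M" and nn: "\<omega> * \<theta> = of_int n"
  shows "is_conductor maximal_order M (zspan3 (of_int f) (of_int f * \<omega>) \<theta>)"
proof -
  have "zspan3 (of_int f) (of_int f * \<omega>) \<theta> \<subseteq> M"
    using zbasis3_mem[OF OB] by (intro subring1_zspan3[OF M subring1_of_int[OF M]]) auto
  thus ?thesis unfolding is_conductor_def
    using conductor_span_ideal[OF LB OB M nn] ideal_subset_conductor_span[OF LB OB nn] by blast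
qed

theorem proposition2p5:
  fixes scale :: "rat \<Rightarrow> 'k::comm_ring_1 \<Rightarrow> 'k"
    and \<O> :: "'k set"
  assumes "etale_cubic_algebra scale"
    and "cubic_ring \<O>"
    and "\<O> \<subseteq> maximal_order"
    and "squarefree (group_index maximal_order \<O>)"
  shows "\<exists>\<omega> \<theta>. zbasis3 maximal_order 1 \<omega> \<theta> \<and> (\<exists>n::int. \<omega> * \<theta> = of_int n) \<and>
           (\<exists>u. \<omega> * u = 1) \<and> (\<exists>v. \<theta> * v = 1) \<and>
           \<O> = zspan3 1 (of_nat (group_index maximal_order \<O>) * \<omega>) \<theta> \<and>
           is_conductor maximal_order \<O>
             (zspan3 (of_nat (group_index maximal_order \<O>))
                     (of_nat (group_index maximal_order \<O>) * \<omega>) \<theta>)"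
proof -
  let ?f = "int (group_index maximal_order \<O>)"
  have inv: "\<exists>u::'k. of_int n * u = 1" if "n \<noteq> 0" for n
    using assms(1) that vector_space_of_int_invertible unfolding etale_cubic_algebra_def by blast
  have reduced: "w = 0" if "w * w = 0" for w :: 'k
    using assms(1) that direct_sum_of_fields_reduced unfolding etale_cubic_algebra_def by blast
  have "group_index maximal_order \<O> \<noteq> 0" using assms(4) not_squarefree_0 by metis
  hence order: "cubic_order \<O>" using assms(2,3) inv by unfold_locales auto
  obtain \<omega>0 \<theta>0 where "zbasis3 maximal_order 1 \<omega>0 \<theta>0" "zbasis3 \<O> 1 (of_int ?f * \<omega>0) \<theta>0"
    using cubic_order.basis_index_multiple[OF order assms(4)] by (metis of_int_of_nat_eq)
  then obtain \<omega> \<theta> n where LB: "zbasis3 maximal_order 1 \<omega> \<theta>" and OB: "zbasis3 \<O> 1 (of_int ?f * \<omega>) \<theta>"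
    and n: "\<omega> * \<theta> = of_int n" "n \<noteq> 0"
    using normalized_basis_nonzero_product[OF reduced] \<open>group_index maximal_order \<O> \<noteq> 0\<close>
    by (metis of_nat_eq_0_iff)
  obtain v where v: "of_int n * v = (1::'k)" using inv[OF n(2)] by blast
  have "\<omega> * (\<theta> * v) = 1" "\<theta> * (\<omega> * v) = 1"
    using n(1) v by (simp_all only: mult.assoc[symmetric] mult.commute[of \<theta> \<omega>])
  moreover have "\<O> = zspan3 1 (of_int ?f * \<omega>) \<theta>" using OB unfolding zbasis3_def by blast
  moreover have "is_conductor maximal_order \<O> (zspan3 (of_int ?f) (of_int ?f * \<omega>) \<theta>)"
    by (rule is_conductor_normalized_basis[OF LB OB cubic_order.subring[OF order] n(1)])
  ultimately show ?thesis using LB n(1) by auto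
qed

end
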